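(* Let $(M,d)$ be a pointed metric space. The space $\mathrm{Lip}_0(M)$ has the LD2P if and only if for every optimal $\mu\in ba(\widetilde M)$ with $\|\mu\|=1$ and every $\gamma\in(0,1)$ there exist $A\subseteq\widetilde M$ and $u,v\in M$ with $u\ne v$ such that $\mu(A)\ge\gamma$ and both $A\cup\{(u,v)\}$ and $A\cup\{(v,u)\}$ are $\gamma$-cyclically monotonic.
   Context: $M$ has base point $0$; $\mathrm{Lip}_0(M)$ is the real Banach space of Lipschitz $f\colon M\to\mathbb R$ with $f(0)=0$, normed by the best Lipschitz constant. A Banach space $X$ has the local diameter 2 property (LD2P) if every slice $S(x^*,\alpha)=\{x\in B_X: x^*(x)>1-\alpha\}$ ($x^*\in X^*$, $\|x^*\|=1$, $\alpha>0$) of the unit ball has diameter $2$. $\widetilde M=\{(x,y)\in M\times M:x\ne y\}$. $ba(\widetilde M)$ is the Banach space of bounded finitely additive signed measures on the power set of $\widetilde M$ with norm $|\mu|(\widetilde M)$. $\Phi f(x,y)=(f(x)-f(y))/d(x,y)$ (de Leeuw map) and $(\Phi^*\mu)(f)=\int_{\widetilde M}\Phi f\,d\mu$. $\mu$ is optimal if it is positive and $\|\Phi^*\mu\|=\|\mu\|$. For $\gamma\in(0,1]$, $A\subseteq\widetilde M$ is $\gamma$-cyclically monotonic if for every finite sequence $(x_1,y_1),\dots,(x_n,y_n)\in A$, with $y_{n+1}=y_1$, $\sum_{i=1}^n\min\{d(x_i,y_{i+1})-\gamma d(x_i,y_i),\,d(y_i,y_{i+1})\}\ge0$. *)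

theory Defs
  imports "HOL-Analysis.Analysis"
begin

text \<open>The pointed metric space is the type 'a (class metric_space) with base point z.\<close>

definition Lip0 :: "'a::metric_space \<Rightarrow> ('a \<Rightarrow> real) set" where
  "Lip0 z = {f. (\<exists>C. lipschitz_on C UNIV f) \<and> f z = 0}"

definition lipnorm :: "('a::metric_space \<Rightarrow> real) \<Rightarrow> real" where
  "lipnorm f = Inf {C. lipschitz_on C UNIV f}"

definition lip0_dual :: "'a::metric_space \<Rightarrow> (('a \<Rightarrow> real) \<Rightarrow> real) \<Rightarrow> bool" where
  "lip0_dual z \<phi> \<longleftrightarrow>
     (\<forall>f\<in>Lip0 z. \<forall>g\<in>Lip0 z. \<phi> (\<lambda>x. f x + g x) = \<phi> f + \<phi> g) \<and>
     (\<forall>c. \<forall>f\<in>Lip0 z. \<phi> (\<lambda>x. c * f x) = c * \<phi> f) \<and>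
     (\<exists>C. \<forall>f\<in>Lip0 z. \<bar>\<phi> f\<bar> \<le> C * lipnorm f)"

definition lip0_ball :: "'a::metric_space \<Rightarrow> ('a \<Rightarrow> real) set" where
  "lip0_ball z = {f \<in> Lip0 z. lipnorm f \<le> 1}"

definition dual_norm :: "'a::metric_space \<Rightarrow> (('a \<Rightarrow> real) \<Rightarrow> real) \<Rightarrow> real" where
  "dual_norm z \<phi> = (SUP f \<in> lip0_ball z. \<bar>\<phi> f\<bar>)"

definition slice :: "'a::metric_space \<Rightarrow> (('a \<Rightarrow> real) \<Rightarrow> real) \<Rightarrow> real \<Rightarrow> ('a \<Rightarrow> real) set" where
  "slice z \<phi> \<alpha> = {f \<in> lip0_ball z. \<phi> f > 1 - \<alpha>}"

definition lip0_diam :: "('a::metric_space \<Rightarrow> real) set \<Rightarrow> real" where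
  "lip0_diam S = (SUP p \<in> S \<times> S. lipnorm (\<lambda>x. fst p x - snd p x))"

definition LD2P :: "'a::metric_space \<Rightarrow> bool" where
  "LD2P z \<longleftrightarrow> (\<forall>\<phi> \<alpha>. lip0_dual z \<phi> \<and> dual_norm z \<phi> = 1 \<and> \<alpha> > 0 \<longrightarrow>
                    lip0_diam (slice z \<phi> \<alpha>) = 2)"

definition offdiag :: "('a \<times> 'a) set" where
  "offdiag = {(x, y). x \<noteq> y}"

text \<open>Bounded finitely additive signed measures on the power set of offdiag
  (only the values on subsets of offdiag are relevant).\<close>
definition ba_measure :: "(('a \<times> 'a) set \<Rightarrow> real) \<Rightarrow> bool" where
  "ba_measure \<mu> \<longleftrightarrow>
     (\<forall>A B. A \<subseteq> offdiag \<and> B \<subseteq> offdiag \<and> A \<inter> B = {} \<longrightarrow> \<mu> (A \<union> B) = \<mu> A + \<mu> B) \<and>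
     (\<exists>C. \<forall>A. A \<subseteq> offdiag \<longrightarrow> \<bar>\<mu> A\<bar> \<le> C)"

definition ba_norm :: "(('a \<times> 'a) set \<Rightarrow> real) \<Rightarrow> real" where
  "ba_norm \<mu> = (SUP P \<in> {P. finite P \<and> disjoint P \<and> (\<forall>A\<in>P. A \<subseteq> offdiag)}. \<Sum>A\<in>P. \<bar>\<mu> A\<bar>)"

definition fin_partition :: "('a \<times> 'a) set set \<Rightarrow> bool" where
  "fin_partition P \<longleftrightarrow> finite P \<and> disjoint P \<and> {} \<notin> P \<and> \<Union>P = offdiag"

text \<open>Integral of a bounded function against a bounded finitely additive measure,
  as the (Moore-Smith) limit of Riemann sums over refining finite partitions.\<close>
definition ba_integral :: "(('a \<times> 'a) set \<Rightarrow> real) \<Rightarrow> ('a \<times> 'a \<Rightarrow> real) \<Rightarrow> real" where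
  "ba_integral \<mu> g = (THE I. \<forall>\<epsilon>>0. \<exists>P. fin_partition P \<and>
      (\<forall>Q t. fin_partition Q \<and> (\<forall>B\<in>Q. \<exists>A\<in>P. B \<subseteq> A) \<and> (\<forall>B\<in>Q. t B \<in> B) \<longrightarrow>
          \<bar>(\<Sum>B\<in>Q. g (t B) * \<mu> B) - I\<bar> < \<epsilon>))"

definition de_leeuw :: "('a::metric_space \<Rightarrow> real) \<Rightarrow> 'a \<times> 'a \<Rightarrow> real" where
  "de_leeuw f = (\<lambda>(x, y). (f x - f y) / dist x y)"

definition Phi_star :: "(('a::metric_space \<times> 'a) set \<Rightarrow> real) \<Rightarrow> ('a \<Rightarrow> real) \<Rightarrow> real" where
  "Phi_star \<mu> f = ba_integral \<mu> (de_leeuw f)"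

definition optimal :: "'a::metric_space \<Rightarrow> (('a \<times> 'a) set \<Rightarrow> real) \<Rightarrow> bool" where
  "optimal z \<mu> \<longleftrightarrow> (\<forall>A. A \<subseteq> offdiag \<longrightarrow> \<mu> A \<ge> 0) \<and> dual_norm z (Phi_star \<mu>) = ba_norm \<mu>"

definition cyc_mono :: "real \<Rightarrow> ('a::metric_space \<times> 'a) set \<Rightarrow> bool" where
  "cyc_mono \<gamma> A \<longleftrightarrow> (\<forall>n::nat. \<forall>x y :: nat \<Rightarrow> 'a. (\<forall>i<n. (x i, y i) \<in> A) \<longrightarrow>
      (\<Sum>i<n. min (dist (x i) (y (Suc i mod n)) - \<gamma> * dist (x i) (y i))
                 (dist (y i) (y (Suc i mod n)))) \<ge> 0)"

end

theory Submission
  imports Defs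
begin

(* For an optimal \<mu> of norm one, \<Phi>*\<mu> is a norm-one functional, and a function f in a thin slice
   of it has de Leeuw transform \<Phi>f \<ge> \<gamma> outside a set of small \<mu>-measure. The LD2P yields two
   such functions f, h with ||f - h|| close to 2, hence a pair (u, v) along which f increases and h
   decreases by almost d(u, v); on the set A where both transforms are \<ge> \<gamma>, f and h are
   potentials witnessing the \<gamma>-cyclic monotonicity of A \<union> {(u, v)} and A \<union> {(v, u)}.
   Conversely, Hahn-Banach extends \<phi> \<circ> \<Phi>\<inverse>, dominated by the supremum over the off-diagonal,
   to a positive functional on bounded functions, which is integration against an optimal \<mu>.
   Rockafellar-type potentials of the two cyclically monotone sets then lie in the slice of \<phi>
   and are at distance at least 2\<gamma>. *)

lemma lipnorm_le:
  assumes "C-lipschitz_on UNIV f"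
  shows "lipnorm f \<le> C"
  unfolding lipnorm_def
  by (rule cInf_lower) (use assms in \<open>auto simp: bdd_below_def lipschitz_on_def\<close>)

lemma lipschitz_on_lipnorm:
  assumes "\<exists>C. C-lipschitz_on UNIV f"
  shows "(lipnorm f)-lipschitz_on UNIV f"
proof -
  let ?S = "{C. C-lipschitz_on UNIV f}"
  have ne: "?S \<noteq> {}" using assms by auto
  have "0 \<le> Inf ?S" by (rule cInf_greatest[OF ne]) (auto simp: lipschitz_on_def)
  moreover have "dist (f x) (f y) \<le> Inf ?S * dist x y" for x y
  proof (cases "x = y")
    case False
    then have d: "dist x y > 0" by simp
    have "dist (f x) (f y) / dist x y \<le> Inf ?S"
      by (rule cInf_greatest[OF ne]) (use d in \<open>auto simp: lipschitz_on_def divide_le_eq\<close>)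
    then show ?thesis using d by (simp add: divide_le_eq)
  qed simp
  ultimately show ?thesis unfolding lipnorm_def lipschitz_on_def by auto
qed

lemma lipnorm_nonneg: "\<exists>C. C-lipschitz_on UNIV f \<Longrightarrow> 0 \<le> lipnorm f"
  using lipschitz_on_lipnorm lipschitz_on_nonneg by blast

lemma abs_diff_le_lipnorm:
  "\<exists>C. C-lipschitz_on UNIV f \<Longrightarrow> \<bar>f x - f y\<bar> \<le> lipnorm f * dist x y"
  using lipschitz_onD[OF lipschitz_on_lipnorm] by (fastforce simp: dist_real_def)

lemma lipschitz_on_UNIV_realI:
  assumes "\<And>x y. \<bar>f x - f y\<bar> \<le> C * dist x y" "0 \<le> C"
  shows "C-lipschitz_on UNIV (f :: 'a::metric_space \<Rightarrow> real)"
  using assms by (intro lipschitz_onI) (auto simp: dist_real_def)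

lemma lipschitz_on_1_iff_diff_le_dist:
  "1-lipschitz_on UNIV (f :: 'a::metric_space \<Rightarrow> real) \<longleftrightarrow> (\<forall>x y. f x - f y \<le> dist x y)"
  unfolding lipschitz_on_def dist_real_def by (metis abs_le_iff dist_commute minus_diff_eq mult_1 zero_le_one UNIV_I)

lemma abs_de_leeuw_le_lipnorm:
  assumes "\<exists>C. C-lipschitz_on UNIV f"
  shows "\<bar>de_leeuw f p\<bar> \<le> lipnorm f"
proof -
  obtain x y where p: "p = (x, y)" by fastforce
  show ?thesis
  proof (cases "x = y")
    case False
    then show ?thesis
      using abs_diff_le_lipnorm[OF assms, of x y] by (simp add: p de_leeuw_def divide_le_eq)
  qed (simp add: p de_leeuw_def lipnorm_nonneg[OF assms])
qed

lemma de_leeuw_ge_iff: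
  "x \<noteq> y \<Longrightarrow> c \<le> de_leeuw f (x, y) \<longleftrightarrow> c * dist x y \<le> f x - f y"
  by (simp add: de_leeuw_def le_divide_eq)

lemma Lip0_lipschitz: "f \<in> Lip0 z \<Longrightarrow> \<exists>C. C-lipschitz_on UNIV f"
  by (simp add: Lip0_def)

lemma Lip0_add: "f \<in> Lip0 z \<Longrightarrow> g \<in> Lip0 z \<Longrightarrow> (\<lambda>x. f x + g x) \<in> Lip0 z"
  unfolding Lip0_def using lipschitz_on_add[of _ UNIV f _ g] by auto

lemma Lip0_cmult: "f \<in> Lip0 z \<Longrightarrow> (\<lambda>x. c * f x) \<in> Lip0 z"
  unfolding Lip0_def using lipschitz_on_cmult_real[of _ UNIV f c] by auto

lemma lip0_ball_iff: "f \<in> lip0_ball z \<longleftrightarrow> 1-lipschitz_on UNIV f \<and> f z = 0"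
  unfolding lip0_ball_def Lip0_def
  using lipnorm_le lipschitz_on_le[OF lipschitz_on_lipnorm] by blast

lemma zero_in_lip0_ball: "(\<lambda>x. 0) \<in> lip0_ball z"
  by (simp add: lip0_ball_iff lipschitz_on_def)

lemma lip0_ball_Lip0: "f \<in> lip0_ball z \<Longrightarrow> f \<in> Lip0 z"
  by (simp add: lip0_ball_def)

lemma lip0_ball_abs_diff_le: "f \<in> lip0_ball z \<Longrightarrow> \<bar>f x - f y\<bar> \<le> dist x y"
  unfolding lip0_ball_iff lipschitz_on_def by (simp add: dist_real_def)

lemma lip0_ball_uminus: "f \<in> lip0_ball z \<Longrightarrow> (\<lambda>x. - f x) \<in> lip0_ball z"
  by (simp add: lip0_ball_iff)

lemma lipnorm_diff_le_2:
  assumes "f \<in> lip0_ball z" "g \<in> lip0_ball z"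
  shows "lipnorm (\<lambda>x. f x - g x) \<le> 2"
  using lipnorm_le lipschitz_on_diff[of 1 UNIV f 1 g] assms by (simp add: lip0_ball_iff)

lemma abs_de_leeuw_le_1:
  assumes "f \<in> lip0_ball z"
  shows "\<bar>de_leeuw f p\<bar> \<le> 1"
  using abs_de_leeuw_le_lipnorm[OF Lip0_lipschitz[OF lip0_ball_Lip0[OF assms]], of p] assms
  by (simp add: lip0_ball_def)

lemma bounded_de_leeuw:
  assumes "\<exists>C. C-lipschitz_on UNIV f"
  shows "bounded (de_leeuw f ` offdiag)"
  unfolding bounded_real using abs_de_leeuw_le_lipnorm[OF assms] by blast

lemma de_leeuw_add: "de_leeuw (\<lambda>x. f x + g x) = (\<lambda>p. de_leeuw f p + de_leeuw g p)"
proof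
  fix p :: "'a \<times> 'a"
  show "de_leeuw (\<lambda>x. f x + g x) p = de_leeuw f p + de_leeuw g p"
    by (cases p) (simp add: de_leeuw_def add_divide_distrib[symmetric] algebra_simps)
qed

lemma de_leeuw_cmult: "de_leeuw (\<lambda>x. c * f x) = (\<lambda>p. c * de_leeuw f p)"
proof
  fix p :: "'a \<times> 'a"
  show "de_leeuw (\<lambda>x. c * f x) p = c * de_leeuw f p"
    by (cases p) (simp add: de_leeuw_def algebra_simps)
qed

lemma le_lipnorm_if_diff_ge:
  assumes "\<exists>C. C-lipschitz_on UNIV g" "u \<noteq> v" "c * dist u v \<le> \<bar>g u - g v\<bar>"
  shows "c \<le> lipnorm g"
proof -
  have "c * dist u v \<le> lipnorm g * dist u v"
    using assms(3) abs_diff_le_lipnorm[OF assms(1), of u v] by linarith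
  then show ?thesis using assms(2) by (simp add: mult_le_cancel_right)
qed

lemma diff_gt_if_less_lipnorm:
  fixes g :: "'a::metric_space \<Rightarrow> real"
  assumes "0 \<le> c" "c < lipnorm g"
  obtains u v where "c * dist u v < g u - g v"
proof -
  have "\<not> c-lipschitz_on UNIV g" using assms(2) lipnorm_le by fastforce
  then obtain u v where "c * dist u v < \<bar>g u - g v\<bar>"
    using lipschitz_on_UNIV_realI[OF _ assms(1)] by (meson not_le)
  then show ?thesis using that[of u v] that[of v u] by (auto simp: dist_commute abs_real_def split: if_splits)
qed

section \<open>Cyclic monotonicity and potentials\<close>

lemma sum_lessThan_Suc_mod: "(\<Sum>i<n. a (Suc i mod n)) = (\<Sum>i<n. a i :: real)"
proof (cases n)
  case (Suc m)
  have "(\<Sum>i<Suc m. a (Suc i mod Suc m)) = (\<Sum>i<m. a (Suc i)) + a 0"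
    by (simp add: sum.cong[of "{..<m}" _ "\<lambda>i. a (Suc i mod Suc m)" "\<lambda>i. a (Suc i)"])
  then show ?thesis using Suc by (simp only: sum.lessThan_Suc_shift add.commute)
qed simp

lemma cyc_mono_if_potential:
  assumes h: "1-lipschitz_on UNIV h" and S: "\<forall>(x, y)\<in>S. \<gamma> * dist x y \<le> h x - h y"
  shows "cyc_mono \<gamma> S"
  unfolding cyc_mono_def
proof (intro allI impI)
  fix n :: nat and x y :: "nat \<Rightarrow> 'a"
  assume xy: "\<forall>i<n. (x i, y i) \<in> S"
  have h_le: "h a - h b \<le> dist a b" for a b
    using h by (simp add: lipschitz_on_1_iff_diff_le_dist)
  have "0 = (\<Sum>i<n. h (y i) - h (y (Suc i mod n)))"
    by (simp add: sum_subtractf sum_lessThan_Suc_mod[of "\<lambda>i. h (y i)"])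
  also have "\<dots> \<le> (\<Sum>i<n. min (dist (x i) (y (Suc i mod n)) - \<gamma> * dist (x i) (y i))
                               (dist (y i) (y (Suc i mod n))))"
  proof (rule sum_mono)
    fix i assume "i \<in> {..<n}"
    then have "\<gamma> * dist (x i) (y i) \<le> h (x i) - h (y i)" using xy S by auto
    then show "h (y i) - h (y (Suc i mod n)) \<le> min (dist (x i) (y (Suc i mod n)) - \<gamma> * dist (x i) (y i))
                                                   (dist (y i) (y (Suc i mod n)))"
      using h_le[of "x i" "y (Suc i mod n)"] h_le[of "y i" "y (Suc i mod n)"] by simp
  qed
  finally show "0 \<le> (\<Sum>i<n. min (dist (x i) (y (Suc i mod n)) - \<gamma> * dist (x i) (y i))
                                 (dist (y i) (y (Suc i mod n))))" .
qed

text \<open>The gain of the walk \<open>r \<rightarrow> y\<^sub>0 \<leadsto> x\<^sub>0 \<rightarrow> y\<^sub>1 \<leadsto> x\<^sub>1 \<rightarrow> \<dots> \<leadsto> x\<^sub>n\<^sub>-\<^sub>1 \<rightarrow> w\<close>: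
  each jump \<open>y\<^sub>i \<leadsto> x\<^sub>i\<close> against a pair of the set earns \<open>\<gamma> d(x\<^sub>i, y\<^sub>i)\<close>, each step
  \<open>\<rightarrow>\<close> costs its length. The supremum over all walks from a base point \<open>r\<close> is the potential.\<close>

definition chain_gain :: "real \<Rightarrow> 'a::metric_space \<Rightarrow> nat \<Rightarrow> (nat \<Rightarrow> 'a) \<Rightarrow> (nat \<Rightarrow> 'a) \<Rightarrow> 'a \<Rightarrow> real"
  where "chain_gain \<gamma> r n x y w = (if n = 0 then - dist r w else
     - dist r (y 0) - (\<Sum>i<n-1. dist (x i) (y (Suc i))) + \<gamma> * (\<Sum>i<n. dist (x i) (y i))
       - dist (x (n-1)) w)"

definition chain_potential :: "real \<Rightarrow> ('a::metric_space \<times> 'a) set \<Rightarrow> 'a \<Rightarrow> 'a \<Rightarrow> real"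
  where "chain_potential \<gamma> S r w = Sup {chain_gain \<gamma> r n x y w | n x y. \<forall>i<n. (x i, y i) \<in> S}"

lemma chain_gain_le_dist:
  assumes "cyc_mono \<gamma> S" and "\<forall>i<n. (x i, y i) \<in> S"
  shows "chain_gain \<gamma> r n x y w \<le> dist w r"
proof (cases n)
  case (Suc m)
  have "0 \<le> (\<Sum>i<Suc m. min (dist (x i) (y (Suc i mod Suc m)) - \<gamma> * dist (x i) (y i))
                              (dist (y i) (y (Suc i mod Suc m))))"
    using assms Suc unfolding cyc_mono_def by blast
  also have "\<dots> \<le> (\<Sum>i<Suc m. dist (x i) (y (Suc i mod Suc m))) - \<gamma> * (\<Sum>i<Suc m. dist (x i) (y i))"
    by (simp only: sum_distrib_left sum_subtractf[symmetric]) (rule sum_mono, simp)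
  also have "(\<Sum>i<Suc m. dist (x i) (y (Suc i mod Suc m))) = (\<Sum>i<m. dist (x i) (y (Suc i))) + dist (x m) (y 0)"
    by (simp add: sum.cong[of "{..<m}" _ "\<lambda>i. dist (x i) (y (Suc i mod Suc m))" "\<lambda>i. dist (x i) (y (Suc i))"])
  finally have "0 \<le> (\<Sum>i<m. dist (x i) (y (Suc i))) + dist (x m) (y 0) - \<gamma> * (\<Sum>i<Suc m. dist (x i) (y i))" .
  moreover have "dist (x m) (y 0) \<le> dist (x m) w + dist w r + dist r (y 0)"
    by (meson add_right_mono dist_triangle order_trans)
  ultimately show ?thesis using Suc by (simp add: chain_gain_def)
qed (simp add: chain_gain_def dist_commute)

lemma chain_gain_le_shift: "chain_gain \<gamma> r n x y w \<le> chain_gain \<gamma> r n x y w' + dist w w'"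
  using dist_triangle[of r w' w] dist_triangle[of "x (n-1)" w' w] by (simp add: chain_gain_def)

lemma chain_gain_extend:
  "chain_gain \<gamma> r (Suc n) (x(n := a)) (y(n := b)) a = chain_gain \<gamma> r n x y b + \<gamma> * dist a b"
proof (cases n)
  case (Suc m)
  have "(\<Sum>i<n. dist ((x(n := a)) i) ((y(n := b)) (Suc i))) = (\<Sum>i<m. dist (x i) (y (Suc i))) + dist (x m) b"
    using Suc by (simp add: sum.cong[of _ _ "\<lambda>i. dist ((x(n := a)) i) ((y(n := b)) (Suc i))" "\<lambda>i. dist (x i) (y (Suc i))"])
  then show ?thesis using Suc by (simp add: chain_gain_def algebra_simps)
qed (simp add: chain_gain_def)

lemma chain_potential_bounds:
  assumes "cyc_mono \<gamma> S"
  shows "chain_potential \<gamma> S r w - chain_potential \<gamma> S r w' \<le> dist w w'"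
    and "(a, b) \<in> S \<Longrightarrow> \<gamma> * dist a b \<le> chain_potential \<gamma> S r a - chain_potential \<gamma> S r b"
proof -
  let ?G = "\<lambda>w. {chain_gain \<gamma> r n x y w | n x y. \<forall>i<n. (x i, y i) \<in> S}"
  have ne: "?G w \<noteq> {}" for w by (auto intro!: exI[of _ 0])
  have le: "chain_gain \<gamma> r n x y w \<le> chain_potential \<gamma> S r w" if "\<forall>i<n. (x i, y i) \<in> S" for n x y w
    unfolding chain_potential_def
    by (rule cSup_upper) (use that chain_gain_le_dist[OF assms] in \<open>auto simp: bdd_above_def intro!: exI[of _ "dist w r"]\<close>)
  have "chain_potential \<gamma> S r w \<le> chain_potential \<gamma> S r w' + dist w w'"
    unfolding chain_potential_def[of \<gamma> S r w]
  proof (rule cSup_least[OF ne])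
    fix v assume "v \<in> ?G w"
    then obtain n x y where "v = chain_gain \<gamma> r n x y w" "\<forall>i<n. (x i, y i) \<in> S" by blast
    then show "v \<le> chain_potential \<gamma> S r w' + dist w w'"
      using chain_gain_le_shift[of \<gamma> r n x y w w'] le[of n x y w'] by simp
  qed
  then show "chain_potential \<gamma> S r w - chain_potential \<gamma> S r w' \<le> dist w w'" by simp
  assume ab: "(a, b) \<in> S"
  have "chain_potential \<gamma> S r b \<le> chain_potential \<gamma> S r a - \<gamma> * dist a b"
    unfolding chain_potential_def[of \<gamma> S r b]
  proof (rule cSup_least[OF ne])
    fix v assume "v \<in> ?G b"
    then obtain n x y where v: "v = chain_gain \<gamma> r n x y b" and xy: "\<forall>i<n. (x i, y i) \<in> S" by blast
    have "\<forall>i<Suc n. ((x(n := a)) i, (y(n := b)) i) \<in> S" using xy ab by auto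
    from le[of "Suc n" "x(n := a)" "y(n := b)" a, OF this] show "v \<le> chain_potential \<gamma> S r a - \<gamma> * dist a b"
      using v chain_gain_extend[of \<gamma> r n x a y b] by simp
  qed
  then show "\<gamma> * dist a b \<le> chain_potential \<gamma> S r a - chain_potential \<gamma> S r b" by simp
qed

lemma cyc_mono_iff_lip0_ball_potential:
  fixes z :: "'a::metric_space"
  shows "cyc_mono \<gamma> S \<longleftrightarrow> (\<exists>h\<in>lip0_ball z. \<forall>(x, y)\<in>S. \<gamma> * dist x y \<le> h x - h y)"
proof
  assume "cyc_mono \<gamma> S"
  define h where "h w = chain_potential \<gamma> S z w - chain_potential \<gamma> S z z" for w
  have "1-lipschitz_on UNIV h"
    using chain_potential_bounds(1)[OF \<open>cyc_mono \<gamma> S\<close>] by (simp add: lipschitz_on_1_iff_diff_le_dist h_def)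
  moreover have "\<forall>(x, y)\<in>S. \<gamma> * dist x y \<le> h x - h y"
    using chain_potential_bounds(2)[OF \<open>cyc_mono \<gamma> S\<close>] by (auto simp: h_def)
  moreover have "h z = 0" by (simp add: h_def)
  ultimately show "\<exists>h\<in>lip0_ball z. \<forall>(x, y)\<in>S. \<gamma> * dist x y \<le> h x - h y"
    by (intro bexI[of _ h]) (auto simp: lip0_ball_iff)
qed (auto simp: lip0_ball_iff intro: cyc_mono_if_potential)

section \<open>Integration against finitely additive measures\<close>

definition refines_partition :: "'b set set \<Rightarrow> 'b set set \<Rightarrow> bool"
  where "refines_partition Q P \<longleftrightarrow> (\<forall>B\<in>Q. \<exists>A\<in>P. B \<subseteq> A)"

definition riemann_sum ::
    "(('a \<times> 'a) set \<Rightarrow> real) \<Rightarrow> ('a \<times> 'a \<Rightarrow> real) \<Rightarrow> ('a \<times> 'a) set set \<Rightarrow> (('a \<times> 'a) set \<Rightarrow> 'a \<times> 'a) \<Rightarrow> real"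
  where "riemann_sum \<mu> g Q t = (\<Sum>B\<in>Q. g (t B) * \<mu> B)"

definition has_ba_integral :: "(('a \<times> 'a) set \<Rightarrow> real) \<Rightarrow> ('a \<times> 'a \<Rightarrow> real) \<Rightarrow> real \<Rightarrow> bool"
  where "has_ba_integral \<mu> g I \<longleftrightarrow> (\<forall>\<epsilon>>0. \<exists>P. fin_partition P \<and>
      (\<forall>Q t. fin_partition Q \<longrightarrow> refines_partition Q P \<longrightarrow> (\<forall>B\<in>Q. t B \<in> B) \<longrightarrow>
        \<bar>riemann_sum \<mu> g Q t - I\<bar> < \<epsilon>))"

definition ba_additive :: "(('a \<times> 'a) set \<Rightarrow> real) \<Rightarrow> bool"
  where "ba_additive \<mu> \<longleftrightarrow>
    (\<forall>A B. A \<subseteq> offdiag \<and> B \<subseteq> offdiag \<and> A \<inter> B = {} \<longrightarrow> \<mu> (A \<union> B) = \<mu> A + \<mu> B)"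

definition ba_nonneg :: "(('a \<times> 'a) set \<Rightarrow> real) \<Rightarrow> bool"
  where "ba_nonneg \<mu> \<longleftrightarrow> (\<forall>A. A \<subseteq> offdiag \<longrightarrow> 0 \<le> \<mu> A)"

lemma ba_measure_additive: "ba_measure \<mu> \<Longrightarrow> ba_additive \<mu>"
  by (simp add: ba_measure_def ba_additive_def)

lemma optimal_nonneg: "optimal z \<mu> \<Longrightarrow> ba_nonneg \<mu>"
  by (simp add: optimal_def ba_nonneg_def)

lemma refines_partition_trans: "refines_partition R Q \<Longrightarrow> refines_partition Q P \<Longrightarrow> refines_partition R P"
  unfolding refines_partition_def by (meson subset_trans)

lemma fin_partition_subset_offdiag: "fin_partition P \<Longrightarrow> B \<in> P \<Longrightarrow> B \<subseteq> offdiag"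
  by (auto simp: fin_partition_def)

lemma fin_partition_tags: "fin_partition P \<Longrightarrow> \<exists>t. \<forall>B\<in>P. t B \<in> B"
  unfolding fin_partition_def by (metis ex_in_conv)

lemma fin_partition_cell_unique:
  assumes "fin_partition P" "C \<in> P" "C' \<in> P" "x \<in> C" "x \<in> C'"
  shows "C = C'"
  using assms unfolding fin_partition_def pairwise_def disjnt_def by blast

lemma fin_partition_common_refinement:
  assumes P: "fin_partition P" and Q: "fin_partition Q"
  shows "\<exists>R. fin_partition R \<and> refines_partition R P \<and> refines_partition R Q"
proof (intro exI conjI)
  let ?R = "(\<lambda>(C, D). C \<inter> D) ` (P \<times> Q) - {{}}"
  show "refines_partition ?R P" "refines_partition ?R Q" by (auto simp: refines_partition_def)
  have "finite ?R" using P Q by (simp add: fin_partition_def)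
  moreover have "disjoint ?R"
    using fin_partition_cell_unique[OF P] fin_partition_cell_unique[OF Q]
    by (auto simp: pairwise_def disjnt_def) blast+
  moreover have "\<Union>?R = offdiag"
  proof
    show "\<Union>?R \<subseteq> offdiag" using P fin_partition_subset_offdiag by fastforce
    show "offdiag \<subseteq> \<Union>?R"
      using P Q unfolding fin_partition_def by blast
  qed
  ultimately show "fin_partition ?R" by (simp add: fin_partition_def)
qed

lemma has_ba_integralD:
  assumes "has_ba_integral \<mu> g I" "\<epsilon> > 0"
  obtains P where "fin_partition P"
    "\<And>Q t. fin_partition Q \<Longrightarrow> refines_partition Q P \<Longrightarrow> \<forall>B\<in>Q. t B \<in> B \<Longrightarrow> \<bar>riemann_sum \<mu> g Q t - I\<bar> < \<epsilon>"
  using assms unfolding has_ba_integral_def by blast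

lemma has_ba_integralI:
  assumes "\<And>\<epsilon>. \<epsilon> > 0 \<Longrightarrow> \<exists>P. fin_partition P \<and> (\<forall>Q t. fin_partition Q \<longrightarrow> refines_partition Q P \<longrightarrow>
     (\<forall>B\<in>Q. t B \<in> B) \<longrightarrow> \<bar>riemann_sum \<mu> g Q t - I\<bar> < \<epsilon>)"
  shows "has_ba_integral \<mu> g I"
  unfolding has_ba_integral_def using assms by blast

lemma has_ba_integral_two:
  assumes "has_ba_integral \<mu> g I" "has_ba_integral \<mu> h J" "\<epsilon> > 0"
  obtains R where "fin_partition R"
    "\<And>Q t. fin_partition Q \<Longrightarrow> refines_partition Q R \<Longrightarrow> \<forall>B\<in>Q. t B \<in> B \<Longrightarrow>
       \<bar>riemann_sum \<mu> g Q t - I\<bar> < \<epsilon> \<and> \<bar>riemann_sum \<mu> h Q t - J\<bar> < \<epsilon>"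
proof -
  obtain P where P: "fin_partition P" and g_close: "\<And>Q t. fin_partition Q \<Longrightarrow> refines_partition Q P \<Longrightarrow>
       \<forall>B\<in>Q. t B \<in> B \<Longrightarrow> \<bar>riemann_sum \<mu> g Q t - I\<bar> < \<epsilon>"
    using has_ba_integralD[OF assms(1,3)] by blast
  obtain P' where P': "fin_partition P'" and h_close: "\<And>Q t. fin_partition Q \<Longrightarrow> refines_partition Q P' \<Longrightarrow>
       \<forall>B\<in>Q. t B \<in> B \<Longrightarrow> \<bar>riemann_sum \<mu> h Q t - J\<bar> < \<epsilon>"
    using has_ba_integralD[OF assms(2,3)] by blast
  obtain R where "fin_partition R" "refines_partition R P" "refines_partition R P'"
    using fin_partition_common_refinement[OF P P'] by blast
  moreover have "\<bar>riemann_sum \<mu> g Q t - I\<bar> < \<epsilon> \<and> \<bar>riemann_sum \<mu> h Q t - J\<bar> < \<epsilon>"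
    if "fin_partition Q" "refines_partition Q R" "\<forall>B\<in>Q. t B \<in> B" "refines_partition R P" "refines_partition R P'" for Q t
    using g_close[OF that(1) refines_partition_trans[OF that(2,4)] that(3)]
      h_close[OF that(1) refines_partition_trans[OF that(2,5)] that(3)] by blast
  ultimately show ?thesis using that by blast
qed

lemma has_ba_integral_two_tagged:
  assumes "has_ba_integral \<mu> g I" "has_ba_integral \<mu> h J" "\<epsilon> > 0"
  obtains R t where "fin_partition R" "\<forall>B\<in>R. t B \<in> B"
    "\<bar>riemann_sum \<mu> g R t - I\<bar> < \<epsilon>" "\<bar>riemann_sum \<mu> h R t - J\<bar> < \<epsilon>"
proof -
  obtain R where R: "fin_partition R" and close: "\<And>Q t. fin_partition Q \<Longrightarrow> refines_partition Q R \<Longrightarrow> \<forall>B\<in>Q. t B \<in> B \<Longrightarrow>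
       \<bar>riemann_sum \<mu> g Q t - I\<bar> < \<epsilon> \<and> \<bar>riemann_sum \<mu> h Q t - J\<bar> < \<epsilon>"
    using has_ba_integral_two[OF assms] by blast
  obtain t where t: "\<forall>B\<in>R. t B \<in> B" using fin_partition_tags[OF R] by blast
  have "refines_partition R R" by (auto simp: refines_partition_def)
  from close[OF R this t] show ?thesis using that[OF R t] by blast
qed

lemma has_ba_integral_unique:
  assumes "has_ba_integral \<mu> g I" "has_ba_integral \<mu> g J"
  shows "I = J"
proof (rule ccontr)
  assume "I \<noteq> J"
  then have "\<bar>I - J\<bar> / 2 > 0" by simp
  then obtain R t where "\<bar>riemann_sum \<mu> g R t - I\<bar> < \<bar>I - J\<bar> / 2" "\<bar>riemann_sum \<mu> g R t - J\<bar> < \<bar>I - J\<bar> / 2"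
    using has_ba_integral_two_tagged[OF assms] by metis
  then show False by (simp add: abs_real_def split: if_splits)
qed

lemma ba_integral_eqI:
  assumes "has_ba_integral \<mu> g I"
  shows "ba_integral \<mu> g = I"
proof -
  have "ba_integral \<mu> g = (THE I. has_ba_integral \<mu> g I)"
    by (simp add: ba_integral_def has_ba_integral_def refines_partition_def riemann_sum_def imp_conjL)
  also have "\<dots> = I"
    using assms has_ba_integral_unique by blast
  finally show ?thesis .
qed

lemma has_ba_integral_add:
  assumes "has_ba_integral \<mu> g I" "has_ba_integral \<mu> h J"
  shows "has_ba_integral \<mu> (\<lambda>x. g x + h x) (I + J)"
proof (rule has_ba_integralI)
  fix \<epsilon> :: real assume "\<epsilon> > 0"
  then obtain R where "fin_partition R" and close: "\<And>Q t. fin_partition Q \<Longrightarrow> refines_partition Q R \<Longrightarrow> \<forall>B\<in>Q. t B \<in> B \<Longrightarrow>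
       \<bar>riemann_sum \<mu> g Q t - I\<bar> < \<epsilon>/2 \<and> \<bar>riemann_sum \<mu> h Q t - J\<bar> < \<epsilon>/2"
    using has_ba_integral_two[OF assms, of "\<epsilon>/2"] by auto
  have "\<bar>riemann_sum \<mu> (\<lambda>x. g x + h x) Q t - (I + J)\<bar> < \<epsilon>"
    if "fin_partition Q" "refines_partition Q R" "\<forall>B\<in>Q. t B \<in> B" for Q t
  proof -
    have "riemann_sum \<mu> (\<lambda>x. g x + h x) Q t = riemann_sum \<mu> g Q t + riemann_sum \<mu> h Q t"
      by (simp add: riemann_sum_def distrib_right sum.distrib)
    with close[OF that] show ?thesis by (simp add: abs_real_def split: if_splits)
  qed
  with \<open>fin_partition R\<close> show "\<exists>P. fin_partition P \<and> (\<forall>Q t. fin_partition Q \<longrightarrow> refines_partition Q P \<longrightarrow>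
     (\<forall>B\<in>Q. t B \<in> B) \<longrightarrow> \<bar>riemann_sum \<mu> (\<lambda>x. g x + h x) Q t - (I + J)\<bar> < \<epsilon>)" by blast
qed

lemma has_ba_integral_cmult:
  assumes "has_ba_integral \<mu> g I"
  shows "has_ba_integral \<mu> (\<lambda>x. c * g x) (c * I)"
proof (rule has_ba_integralI)
  fix \<epsilon> :: real assume "\<epsilon> > 0"
  then have "\<epsilon> / (\<bar>c\<bar> + 1) > 0" by (simp add: add_nonneg_pos)
  then obtain P where "fin_partition P" and close: "\<And>Q t. fin_partition Q \<Longrightarrow> refines_partition Q P \<Longrightarrow>
       \<forall>B\<in>Q. t B \<in> B \<Longrightarrow> \<bar>riemann_sum \<mu> g Q t - I\<bar> < \<epsilon> / (\<bar>c\<bar> + 1)"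
    using has_ba_integralD[OF assms] by blast
  have "\<bar>riemann_sum \<mu> (\<lambda>x. c * g x) Q t - c * I\<bar> < \<epsilon>"
    if "fin_partition Q" "refines_partition Q P" "\<forall>B\<in>Q. t B \<in> B" for Q t
  proof -
    have "\<bar>riemann_sum \<mu> (\<lambda>x. c * g x) Q t - c * I\<bar> = \<bar>c\<bar> * \<bar>riemann_sum \<mu> g Q t - I\<bar>"
      by (simp add: riemann_sum_def sum_distrib_left algebra_simps flip: abs_mult)
    also have "\<dots> \<le> \<bar>c\<bar> * (\<epsilon> / (\<bar>c\<bar> + 1))"
      using close[OF that] by (intro mult_left_mono) auto
    also have "\<dots> < \<epsilon>" using \<open>\<epsilon> > 0\<close> by (simp add: field_simps)
    finally show ?thesis .
  qed
  with \<open>fin_partition P\<close> show "\<exists>P. fin_partition P \<and> (\<forall>Q t. fin_partition Q \<longrightarrow> refines_partition Q P \<longrightarrow>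
     (\<forall>B\<in>Q. t B \<in> B) \<longrightarrow> \<bar>riemann_sum \<mu> (\<lambda>x. c * g x) Q t - c * I\<bar> < \<epsilon>)" by blast
qed

lemma ba_additiveD:
  "ba_additive \<mu> \<Longrightarrow> A \<subseteq> offdiag \<Longrightarrow> B \<subseteq> offdiag \<Longrightarrow> A \<inter> B = {} \<Longrightarrow> \<mu> (A \<union> B) = \<mu> A + \<mu> B"
  unfolding ba_additive_def by blast

lemma ba_additive_empty:
  assumes "ba_additive \<mu>"
  shows "\<mu> {} = 0"
proof -
  have "\<mu> ({} \<union> {}) = \<mu> {} + \<mu> {}" by (rule ba_additiveD[OF assms]) auto
  then show ?thesis by simp
qed

lemma ba_additive_Union:
  assumes "ba_additive \<mu>" "finite F" "disjoint F" "\<forall>B\<in>F. B \<subseteq> offdiag"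
  shows "\<mu> (\<Union>F) = (\<Sum>B\<in>F. \<mu> B)"
  using assms(2-4)
proof (induction F rule: finite_induct)
  case (insert B F)
  have "disjoint F" using insert.prems(1) by (auto simp: pairwise_insert)
  have "disjnt B C" if "C \<in> F" for C
    using insert.prems(1) insert.hyps(2) that unfolding pairwise_def by auto
  then have "B \<inter> \<Union>F = {}" by (auto simp: disjnt_def)
  moreover have "B \<subseteq> offdiag" "\<Union>F \<subseteq> offdiag" using insert.prems(2) by auto
  ultimately have "\<mu> (B \<union> \<Union>F) = \<mu> B + \<mu> (\<Union>F)"
    using ba_additiveD[OF assms(1)] by simp
  then show ?case using insert \<open>disjoint F\<close> by simp
qed (simp add: ba_additive_empty[OF assms(1)])

lemma ba_additive_cells:
  assumes "ba_additive \<mu>" "fin_partition Q" "C \<subseteq> offdiag" "\<forall>B\<in>Q. B \<subseteq> C \<or> B \<inter> C = {}"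
  shows "\<mu> C = (\<Sum>B\<in>{B\<in>Q. B \<subseteq> C}. \<mu> B)"
proof -
  have "C \<subseteq> \<Union>Q" using assms(2,3) by (simp add: fin_partition_def)
  then have "C = \<Union>{B\<in>Q. B \<subseteq> C}" using assms(4) by blast
  also have "\<mu> \<dots> = (\<Sum>B\<in>{B\<in>Q. B \<subseteq> C}. \<mu> B)"
    using assms(1,2,3) by (intro ba_additive_Union) (auto simp: fin_partition_def intro: pairwise_subset)
  finally show ?thesis .
qed

lemma ba_additive_partition:
  assumes "ba_additive \<mu>" "fin_partition Q"
  shows "(\<Sum>B\<in>Q. \<mu> B) = \<mu> offdiag"
proof -
  have "{B\<in>Q. B \<subseteq> offdiag} = Q" using fin_partition_subset_offdiag[OF assms(2)] by blast
  then show ?thesis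
    using ba_additive_cells[OF assms order_refl] fin_partition_subset_offdiag[OF assms(2)] by simp
qed

lemma ba_additive_Diff:
  assumes "ba_additive \<mu>" "A \<subseteq> B" "B \<subseteq> offdiag"
  shows "\<mu> (B - A) = \<mu> B - \<mu> A"
proof -
  have "\<mu> (A \<union> (B - A)) = \<mu> A + \<mu> (B - A)"
    using assms by (intro ba_additiveD) auto
  moreover have "A \<union> (B - A) = B" using assms(2) by blast
  ultimately show ?thesis by simp
qed

lemma ba_nonneg_mono:
  assumes "ba_additive \<mu>" "ba_nonneg \<mu>" "A \<subseteq> B" "B \<subseteq> offdiag"
  shows "\<mu> A \<le> \<mu> B"
proof -
  have "0 \<le> \<mu> (B - A)" using assms(2,4) unfolding ba_nonneg_def by blast
  then show ?thesis using ba_additive_Diff[OF assms(1,3,4)] by simp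
qed

lemma ba_nonneg_Un_le:
  assumes "ba_additive \<mu>" "ba_nonneg \<mu>" "A \<subseteq> offdiag" "B \<subseteq> offdiag"
  shows "\<mu> (A \<union> B) \<le> \<mu> A + \<mu> B"
proof -
  have "\<mu> (A \<union> B) = \<mu> A + \<mu> (B - A)"
    using assms(1,3,4) ba_additive_Diff[of \<mu> A "A \<union> B"] by (simp add: Un_Diff)
  also have "\<mu> (B - A) \<le> \<mu> B" using assms by (intro ba_nonneg_mono) auto
  finally show ?thesis by simp
qed

lemma has_ba_integral_mono:
  assumes "has_ba_integral \<mu> g I" "has_ba_integral \<mu> h J" "ba_nonneg \<mu>"
    and "\<And>x. x \<in> offdiag \<Longrightarrow> g x \<le> h x"
  shows "I \<le> J"
proof (rule ccontr)
  assume "\<not> I \<le> J"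
  then obtain R t where R: "fin_partition R" "\<forall>B\<in>R. t B \<in> B"
    and close: "\<bar>riemann_sum \<mu> g R t - I\<bar> < (I - J) / 2" "\<bar>riemann_sum \<mu> h R t - J\<bar> < (I - J) / 2"
    using has_ba_integral_two_tagged[OF assms(1,2), of "(I - J) / 2"] by auto
  have "riemann_sum \<mu> g R t \<le> riemann_sum \<mu> h R t"
    unfolding riemann_sum_def
  proof (rule sum_mono, rule mult_right_mono)
    fix B assume "B \<in> R"
    then have "B \<subseteq> offdiag" by (rule fin_partition_subset_offdiag[OF R(1)])
    moreover have "t B \<in> B" using R(2) \<open>B \<in> R\<close> by blast
    ultimately show "g (t B) \<le> h (t B)" "0 \<le> \<mu> B"
      using assms(3) assms(4)[of "t B"] by (auto simp: ba_nonneg_def)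
  qed
  with close show False by (simp add: abs_real_def split: if_splits)
qed

lemma has_ba_integral_const:
  assumes "ba_additive \<mu>"
  shows "has_ba_integral \<mu> (\<lambda>x. c) (c * \<mu> offdiag)"
proof (rule has_ba_integralI)
  have "fin_partition ({offdiag} - {{}})"
    by (auto simp: fin_partition_def pairwise_def)
  moreover have "riemann_sum \<mu> (\<lambda>x. c) Q t = c * \<mu> offdiag" if "fin_partition Q" for Q t
    using ba_additive_partition[OF assms that] by (simp add: riemann_sum_def flip: sum_distrib_left)
  ultimately show "\<exists>P. fin_partition P \<and> (\<forall>Q t. fin_partition Q \<longrightarrow> refines_partition Q P \<longrightarrow>
     (\<forall>B\<in>Q. t B \<in> B) \<longrightarrow> \<bar>riemann_sum \<mu> (\<lambda>x. c) Q t - c * \<mu> offdiag\<bar> < \<epsilon>)" if "\<epsilon> > 0" for \<epsilon>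
    using that by (intro exI[of _ "{offdiag} - {{}}"]) auto
qed

lemma has_ba_integral_indicator:
  assumes "ba_additive \<mu>" "A \<subseteq> offdiag"
  shows "has_ba_integral \<mu> (indicator A) (\<mu> A)"
proof (rule has_ba_integralI)
  define P where "P = {A, offdiag - A} - {{}}"
  have P: "fin_partition P"
    unfolding fin_partition_def P_def using assms(2) by (auto simp: pairwise_def disjnt_def)
  have "riemann_sum \<mu> (indicator A) Q t = \<mu> A"
    if Q: "fin_partition Q" "refines_partition Q P" "\<forall>B\<in>Q. t B \<in> B" for Q t
  proof -
    have side: "B \<subseteq> A \<or> B \<inter> A = {}" if "B \<in> Q" for B
      using Q(2) that unfolding refines_partition_def P_def by auto
    have "riemann_sum \<mu> (indicator A) Q t = (\<Sum>B\<in>Q. if B \<subseteq> A then \<mu> B else 0)"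
      unfolding riemann_sum_def using Q(3) side by (intro sum.cong) (auto simp: indicator_def)
    also have "\<dots> = (\<Sum>B\<in>{B\<in>Q. B \<subseteq> A}. \<mu> B)"
      using Q(1) by (simp add: sum.inter_filter fin_partition_def)
    also have "\<dots> = \<mu> A"
      using ba_additive_cells[OF assms(1) Q(1) assms(2)] side by simp
    finally show ?thesis .
  qed
  then show "\<exists>P. fin_partition P \<and> (\<forall>Q t. fin_partition Q \<longrightarrow> refines_partition Q P \<longrightarrow>
     (\<forall>B\<in>Q. t B \<in> B) \<longrightarrow> \<bar>riemann_sum \<mu> (indicator A) Q t - \<mu> A\<bar> < \<epsilon>)" if "\<epsilon> > 0" for \<epsilon>
    using P that by auto
qed

definition level_partition :: "nat \<Rightarrow> ('a \<times> 'a \<Rightarrow> real) \<Rightarrow> ('a \<times> 'a) set set"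
  where "level_partition n g =
    (\<lambda>k. {p\<in>offdiag. \<lfloor>real n * g p\<rfloor> = k}) ` ((\<lambda>p. \<lfloor>real n * g p\<rfloor>) ` offdiag)"

lemma fin_partition_level_partition:
  fixes g :: "'a \<times> 'a \<Rightarrow> real"
  assumes "bounded (g ` offdiag)"
  shows "fin_partition (level_partition n g)"
  unfolding fin_partition_def
proof (intro conjI)
  obtain K where K: "\<And>p. p \<in> offdiag \<Longrightarrow> \<bar>g p\<bar> \<le> K"
    using assms by (auto simp: bounded_real)
  have "(\<lambda>p. \<lfloor>real n * g p\<rfloor>) ` (offdiag :: ('a \<times> 'a) set) \<subseteq> {\<lfloor>- (real n * K)\<rfloor>..\<lfloor>real n * K\<rfloor>}"
  proof (rule image_subsetI)
    fix p :: "'a \<times> 'a" assume "p \<in> offdiag"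
    then have "- K \<le> g p" "g p \<le> K" using K by fastforce+
    then have "- (real n * K) \<le> real n * g p" "real n * g p \<le> real n * K"
      using mult_left_mono[of "- K" "g p" "real n"] mult_left_mono[of "g p" K "real n"] by auto
    then show "\<lfloor>real n * g p\<rfloor> \<in> {\<lfloor>- (real n * K)\<rfloor>..\<lfloor>real n * K\<rfloor>}"
      by (simp add: floor_mono)
  qed
  then have "finite ((\<lambda>p. \<lfloor>real n * g p\<rfloor>) ` (offdiag :: ('a \<times> 'a) set))"
    by (rule finite_subset) simp
  then show "finite (level_partition n g)"
    unfolding level_partition_def by (rule finite_imageI)
  show "disjoint (level_partition n g)"
    unfolding level_partition_def pairwise_def disjnt_def by auto
  show "{} \<notin> level_partition n g" "\<Union> (level_partition n g) = offdiag"
    unfolding level_partition_def by blast+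
qed

lemma level_partition_oscillation:
  assumes "n > 0" "C \<in> level_partition n g" "x \<in> C" "y \<in> C"
  shows "\<bar>g x - g y\<bar> \<le> 1 / real n"
proof -
  have "\<lfloor>real n * g x\<rfloor> = \<lfloor>real n * g y\<rfloor>"
    using assms(2-4) by (auto simp: level_partition_def)
  then have "\<bar>real n * g x - real n * g y\<bar> < 1" by linarith
  moreover have "\<bar>real n * g x - real n * g y\<bar> = real n * \<bar>g x - g y\<bar>"
    by (simp add: abs_mult flip: right_diff_distrib)
  ultimately have "real n * \<bar>g x - g y\<bar> < 1" by simp
  with assms(1) show ?thesis by (simp add: field_simps)
qed

lemma riemann_sum_refines_partition:
  assumes \<mu>: "ba_additive \<mu>" and P: "fin_partition P" and Q: "fin_partition Q"
    and cell: "\<And>B. B \<in> Q \<Longrightarrow> cell B \<in> P" "\<And>B. B \<in> Q \<Longrightarrow> B \<subseteq> cell B"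
  shows "riemann_sum \<mu> g P s = riemann_sum \<mu> g Q (\<lambda>B. s (cell B))"
proof -
  have cell_eq: "C = cell B" if "B \<in> Q" "C \<in> P" "x \<in> B" "x \<in> C" for B C x
    using fin_partition_cell_unique[OF P that(2) cell(1)[OF that(1)] that(4)] cell(2)[OF that(1)] that(3)
    by blast
  have cells: "{C\<in>P. B \<subseteq> C} = {cell B}" if "B \<in> Q" for B
  proof -
    obtain x where "x \<in> B" using Q \<open>B \<in> Q\<close> unfolding fin_partition_def by (metis ex_in_conv)
    then show ?thesis using cell cell_eq \<open>B \<in> Q\<close> by blast
  qed
  have "riemann_sum \<mu> g P s = (\<Sum>C\<in>P. g (s C) * (\<Sum>B\<in>{B\<in>Q. B \<subseteq> C}. \<mu> B))"
    unfolding riemann_sum_def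
  proof (intro sum.cong refl arg_cong[where f = "times _"] ba_additive_cells[OF \<mu> Q])
    fix C assume "C \<in> P"
    then show "C \<subseteq> offdiag" by (rule fin_partition_subset_offdiag[OF P])
    show "\<forall>B\<in>Q. B \<subseteq> C \<or> B \<inter> C = {}"
      using cell(2) cell_eq \<open>C \<in> P\<close> by blast
  qed
  also have "\<dots> = (\<Sum>C\<in>P. \<Sum>B\<in>{B\<in>Q. B \<subseteq> C}. g (s C) * \<mu> B)"
    by (simp add: sum_distrib_left)
  also have "\<dots> = (\<Sum>B\<in>Q. \<Sum>C\<in>{C\<in>P. B \<subseteq> C}. g (s C) * \<mu> B)"
    using P Q by (intro sum.swap_restrict) (auto simp: fin_partition_def)
  also have "\<dots> = riemann_sum \<mu> g Q (\<lambda>B. s (cell B))"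
    using cells by (simp add: riemann_sum_def)
  finally show ?thesis .
qed

lemma riemann_sum_tags_close:
  assumes \<mu>: "ba_additive \<mu>" "ba_nonneg \<mu>" and Q: "fin_partition Q"
    and close: "\<And>B. B \<in> Q \<Longrightarrow> \<bar>g (t B) - g (t' B)\<bar> \<le> e"
  shows "\<bar>riemann_sum \<mu> g Q t - riemann_sum \<mu> g Q t'\<bar> \<le> e * \<mu> offdiag"
proof -
  have "\<bar>riemann_sum \<mu> g Q t - riemann_sum \<mu> g Q t'\<bar> = \<bar>\<Sum>B\<in>Q. (g (t B) - g (t' B)) * \<mu> B\<bar>"
    by (simp add: riemann_sum_def sum_subtractf left_diff_distrib)
  also have "\<dots> \<le> (\<Sum>B\<in>Q. e * \<mu> B)"
  proof (rule order_trans[OF sum_abs sum_mono])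
    fix B assume "B \<in> Q"
    then have "0 \<le> \<mu> B"
      using \<mu>(2) fin_partition_subset_offdiag[OF Q] by (simp add: ba_nonneg_def)
    with close[OF \<open>B \<in> Q\<close>] show "\<bar>(g (t B) - g (t' B)) * \<mu> B\<bar> \<le> e * \<mu> B"
      by (simp add: abs_mult mult_right_mono)
  qed
  also have "\<dots> = e * \<mu> offdiag"
    using ba_additive_partition[OF \<mu>(1) Q] by (simp flip: sum_distrib_left)
  finally show ?thesis .
qed

lemma riemann_sum_refinement_close:
  assumes \<mu>: "ba_additive \<mu>" "ba_nonneg \<mu>"
    and P: "fin_partition P" "\<forall>C\<in>P. s C \<in> C"
    and Q: "fin_partition Q" "refines_partition Q P" "\<forall>B\<in>Q. t B \<in> B"
    and osc: "\<forall>C\<in>P. \<forall>x\<in>C. \<forall>y\<in>C. \<bar>g x - g y\<bar> \<le> e"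
  shows "\<bar>riemann_sum \<mu> g Q t - riemann_sum \<mu> g P s\<bar> \<le> e * \<mu> offdiag"
proof -
  obtain cell where cell: "\<And>B. B \<in> Q \<Longrightarrow> cell B \<in> P" "\<And>B. B \<in> Q \<Longrightarrow> B \<subseteq> cell B"
    using bchoice[OF Q(2)[unfolded refines_partition_def Bex_def]] by blast
  have "\<bar>g (t B) - g (s (cell B))\<bar> \<le> e" if "B \<in> Q" for B
    using osc cell[OF that] P(2) Q(3) that by blast
  from riemann_sum_tags_close[OF \<mu> Q(1) this] show ?thesis
    by (simp add: riemann_sum_refines_partition[OF \<mu>(1) P(1) Q(1) cell])
qed

lemma has_ba_integral_level_partitionI:
  assumes g: "bounded (g ` offdiag)"
    and close: "\<And>n Q t. 0 < n \<Longrightarrow> fin_partition Q \<Longrightarrow> refines_partition Q (level_partition n g) \<Longrightarrow>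
      \<forall>B\<in>Q. t B \<in> B \<Longrightarrow> \<bar>riemann_sum \<mu> g Q t - I\<bar> \<le> c / real n"
  shows "has_ba_integral \<mu> g I"
proof (rule has_ba_integralI)
  fix \<epsilon> :: real assume "\<epsilon> > 0"
  define n where "n = Suc (nat \<lceil>c / \<epsilon>\<rceil>)"
  have "n > 0" by (simp add: n_def)
  have "c / \<epsilon> < real n" unfolding n_def by linarith
  with \<open>\<epsilon> > 0\<close> \<open>n > 0\<close> have small: "c / real n < \<epsilon>" by (simp add: field_simps)
  show "\<exists>P. fin_partition P \<and> (\<forall>Q t. fin_partition Q \<longrightarrow> refines_partition Q P \<longrightarrow>
      (\<forall>B\<in>Q. t B \<in> B) \<longrightarrow> \<bar>riemann_sum \<mu> g Q t - I\<bar> < \<epsilon>)"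
  proof (intro exI conjI allI impI)
    show "fin_partition (level_partition n g)" by (rule fin_partition_level_partition[OF g])
    fix Q t assume "fin_partition Q" "refines_partition Q (level_partition n g)" "\<forall>B\<in>Q. t B \<in> B"
    from close[OF \<open>n > 0\<close> this] small show "\<bar>riemann_sum \<mu> g Q t - I\<bar> < \<epsilon>" by linarith
  qed
qed

lemma ex_limit_with_rate:
  fixes s :: "nat \<Rightarrow> real"
  assumes cauchy: "\<And>n m. 0 < n \<Longrightarrow> 0 < m \<Longrightarrow> \<bar>s n - s m\<bar> \<le> c / real n + c / real m"
  obtains I where "\<And>n. 0 < n \<Longrightarrow> \<bar>s n - I\<bar> \<le> c / real n"
proof
  define I where "I = (SUP k. s (Suc k) - c / real (Suc k))"
  have bdd: "bdd_above (range (\<lambda>k. s (Suc k) - c / real (Suc k)))"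
  proof (rule bdd_aboveI2)
    fix k
    show "s (Suc k) - c / real (Suc k) \<le> s 1 + c"
      using cauchy[of "Suc k" 1] by (simp add: abs_real_def split: if_splits)
  qed
  fix n :: nat assume "0 < n"
  then obtain k where k: "n = Suc k" using gr0_implies_Suc by blast
  have "s n - c / real n \<le> I" unfolding I_def k by (rule cSUP_upper[OF _ bdd]) simp
  moreover have "I \<le> s n + c / real n"
    unfolding I_def
  proof (rule cSUP_least)
    fix k
    show "s (Suc k) - c / real (Suc k) \<le> s n + c / real n"
      using cauchy[of "Suc k" n] \<open>0 < n\<close> by (simp add: abs_real_def split: if_splits)
  qed simp
  ultimately show "\<bar>s n - I\<bar> \<le> c / real n" by simp
qed

lemma has_ba_integral_exists:
  fixes g :: "'a \<times> 'a \<Rightarrow> real"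
  assumes \<mu>: "ba_additive \<mu>" "ba_nonneg \<mu>" and g: "bounded (g ` offdiag)"
  shows "\<exists>I. has_ba_integral \<mu> g I"
proof -
  define M where "M = \<mu> offdiag"
  define s where "s n = riemann_sum \<mu> g (level_partition n g) (\<lambda>C. SOME p. p \<in> C)" for n
  have tags: "\<forall>C\<in>P. (SOME p. p \<in> C) \<in> C" if "fin_partition P" for P :: "('a \<times> 'a) set set"
    using that by (auto simp: fin_partition_def some_in_eq)
  have close: "\<bar>riemann_sum \<mu> g Q t - s n\<bar> \<le> M / real n"
    if "n > 0" "fin_partition Q" "refines_partition Q (level_partition n g)" "\<forall>B\<in>Q. t B \<in> B" for n Q t
  proof -
    have "\<forall>C\<in>level_partition n g. \<forall>x\<in>C. \<forall>y\<in>C. \<bar>g x - g y\<bar> \<le> 1 / real n"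
      using level_partition_oscillation[OF that(1)] by blast
    from riemann_sum_refinement_close[OF \<mu> fin_partition_level_partition[OF g]
        tags[OF fin_partition_level_partition[OF g]] that(2-4) this]
    show ?thesis by (simp add: s_def M_def)
  qed
  have "\<bar>s n - s m\<bar> \<le> M / real n + M / real m" if "n > 0" "m > 0" for n m
  proof -
    obtain R where R: "fin_partition R" "refines_partition R (level_partition n g)"
      "refines_partition R (level_partition m g)"
      using fin_partition_common_refinement[OF fin_partition_level_partition[OF g] fin_partition_level_partition[OF g]]
      by blast
    from close[OF that(1) R(1,2) tags[OF R(1)]] close[OF that(2) R(1,3) tags[OF R(1)]]
    show ?thesis by (simp add: abs_real_def split: if_splits)
  qed
  then obtain I where I: "\<And>n. 0 < n \<Longrightarrow> \<bar>s n - I\<bar> \<le> M / real n"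
    using ex_limit_with_rate by blast
  have "\<bar>riemann_sum \<mu> g Q t - I\<bar> \<le> 2 * M / real n"
    if "0 < n" "fin_partition Q" "refines_partition Q (level_partition n g)" "\<forall>B\<in>Q. t B \<in> B" for n Q t
    using close[OF that] I[OF that(1)] by (simp add: abs_real_def split: if_splits)
  then have "has_ba_integral \<mu> g I" by (rule has_ba_integral_level_partitionI[OF g])
  then show ?thesis ..
qed

lemma bounded_indicator: "bounded ((indicator A :: 'b \<Rightarrow> real) ` S)"
  unfolding bounded_real by (intro exI[of _ 1]) (auto simp: indicator_def)

lemma bounded_const_fun: "bounded ((\<lambda>x. c :: real) ` S)"
  unfolding bounded_real by (intro exI[of _ "\<bar>c\<bar>"]) auto

lemma bounded_cmult_comp: "bounded (f ` S) \<Longrightarrow> bounded ((\<lambda>x. c * f x :: real) ` S)"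
  using bounded_scaleR_comp[of f S c] by simp

lemma bounded_sum_comp:
  fixes h :: "'i \<Rightarrow> 'b \<Rightarrow> real"
  assumes "finite F" "\<And>B. B \<in> F \<Longrightarrow> bounded (h B ` S)"
  shows "bounded ((\<lambda>x. \<Sum>B\<in>F. h B x) ` S)"
  using assms by (induction F rule: finite_induct) (auto intro: bounded_plus_comp simp: bounded_const_fun)

lemma sum_indicator_fin_partition:
  fixes v :: "('a \<times> 'a) set \<Rightarrow> real"
  assumes "fin_partition Q" "B \<in> Q" "x \<in> B"
  shows "(\<Sum>C\<in>Q. v C * indicator C x) = v B"
proof -
  have "x \<notin> C" if "C \<in> Q - {B}" for C
    using that fin_partition_cell_unique[OF assms(1) _ assms(2) _ assms(3)] by blast
  then have rest: "(\<Sum>C\<in>Q - {B}. v C * indicator C x) = 0" by (intro sum.neutral) simp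
  have "finite Q" using assms(1) by (simp add: fin_partition_def)
  then have "(\<Sum>C\<in>Q. v C * indicator C x) = v B * indicator B x + (\<Sum>C\<in>Q - {B}. v C * indicator C x)"
    using assms(2) by (rule sum.remove)
  then show ?thesis by (simp only: rest) (simp add: assms(3))
qed

locale positive_functional =
  fixes \<Lambda> :: "('a \<times> 'a \<Rightarrow> real) \<Rightarrow> real"
  assumes add: "bounded (a ` offdiag) \<Longrightarrow> bounded (b ` offdiag) \<Longrightarrow> \<Lambda> (\<lambda>x. a x + b x) = \<Lambda> a + \<Lambda> b"
    and cmult: "bounded (a ` offdiag) \<Longrightarrow> \<Lambda> (\<lambda>x. c * a x) = c * \<Lambda> a"
    and mono: "bounded (a ` offdiag) \<Longrightarrow> bounded (b ` offdiag) \<Longrightarrow>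
      (\<And>x. x \<in> offdiag \<Longrightarrow> a x \<le> b x) \<Longrightarrow> \<Lambda> a \<le> \<Lambda> b"
begin

definition induced_measure :: "('a \<times> 'a) set \<Rightarrow> real"
  where "induced_measure A = \<Lambda> (indicator (A \<inter> offdiag))"

lemma cong:
  "bounded (a ` offdiag) \<Longrightarrow> bounded (b ` offdiag) \<Longrightarrow> (\<And>x. x \<in> offdiag \<Longrightarrow> a x = b x) \<Longrightarrow> \<Lambda> a = \<Lambda> b"
  by (intro order.antisym mono) auto

lemma sum:
  assumes "finite F" "\<And>B. B \<in> F \<Longrightarrow> bounded (h B ` offdiag)"
  shows "\<Lambda> (\<lambda>x. \<Sum>B\<in>F. h B x) = (\<Sum>B\<in>F. \<Lambda> (h B))"
  using assms
proof (induction F rule: finite_induct)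
  case empty
  show ?case using cmult[OF bounded_const_fun, of 0 0] by simp
next
  case (insert B F)
  then show ?case using add[OF _ bounded_sum_comp[of F h]] by simp
qed

lemma indicator_eq_induced_measure: "B \<subseteq> offdiag \<Longrightarrow> \<Lambda> (indicator B) = induced_measure B"
  by (simp add: induced_measure_def Int_absorb2)

lemma const_eq: "\<Lambda> (\<lambda>x. c) = c * induced_measure offdiag"
proof -
  have "\<Lambda> (\<lambda>x. c) = \<Lambda> (\<lambda>x. c * indicator offdiag x)"
    by (intro cong bounded_const_fun bounded_cmult_comp bounded_indicator) simp
  also have "\<dots> = c * induced_measure offdiag"
    by (simp add: cmult[OF bounded_indicator] indicator_eq_induced_measure)
  finally show ?thesis .
qed

lemma induced_measure_additive: "ba_additive induced_measure"
  unfolding ba_additive_def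
proof (intro allI impI)
  fix A B :: "('a \<times> 'a) set" assume "A \<subseteq> offdiag \<and> B \<subseteq> offdiag \<and> A \<inter> B = {}"
  then have "indicator (A \<union> B) = (\<lambda>x. indicator A x + indicator B x :: real)"
    by (auto simp: indicator_def fun_eq_iff)
  with \<open>A \<subseteq> offdiag \<and> B \<subseteq> offdiag \<and> A \<inter> B = {}\<close>
  show "induced_measure (A \<union> B) = induced_measure A + induced_measure B"
    by (simp add: add[OF bounded_indicator bounded_indicator] indicator_eq_induced_measure[symmetric])
qed

lemma induced_measure_nonneg: "ba_nonneg induced_measure"
  unfolding ba_nonneg_def
proof (intro allI impI)
  fix A :: "('a \<times> 'a) set" assume "A \<subseteq> offdiag"
  have "\<Lambda> (\<lambda>x. 0) \<le> \<Lambda> (indicator A)" by (intro mono bounded_const_fun bounded_indicator) auto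
  then show "0 \<le> induced_measure A"
    using const_eq[of 0] indicator_eq_induced_measure[OF \<open>A \<subseteq> offdiag\<close>] by simp
qed

lemma induced_measure_ba_measure: "ba_measure induced_measure"
proof -
  have "\<bar>induced_measure A\<bar> \<le> induced_measure offdiag" if "A \<subseteq> offdiag" for A
    using ba_nonneg_mono[OF induced_measure_additive induced_measure_nonneg that order_refl]
      induced_measure_nonneg that by (simp add: ba_nonneg_def)
  then show ?thesis
    using induced_measure_additive by (auto simp: ba_measure_def ba_additive_def)
qed

lemma riemann_sum_eq:
  assumes "fin_partition Q"
  shows "riemann_sum induced_measure g Q t = \<Lambda> (\<lambda>x. \<Sum>B\<in>Q. g (t B) * indicator B x)"
proof -
  have "\<Lambda> (\<lambda>x. \<Sum>B\<in>Q. g (t B) * indicator B x) = (\<Sum>B\<in>Q. \<Lambda> (\<lambda>x. g (t B) * indicator B x))"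
    using assms by (intro sum bounded_cmult_comp bounded_indicator) (simp add: fin_partition_def)
  also have "\<dots> = (\<Sum>B\<in>Q. g (t B) * induced_measure B)"
    using fin_partition_subset_offdiag[OF assms]
    by (intro sum.cong refl) (simp add: cmult[OF bounded_indicator] indicator_eq_induced_measure)
  finally show ?thesis by (simp add: riemann_sum_def)
qed

lemma riemann_sum_close:
  assumes g: "bounded (g ` offdiag)" and Q: "fin_partition Q" "\<forall>B\<in>Q. t B \<in> B"
    and close: "\<And>B x. B \<in> Q \<Longrightarrow> x \<in> B \<Longrightarrow> \<bar>g x - g (t B)\<bar> \<le> e"
  shows "\<bar>riemann_sum induced_measure g Q t - \<Lambda> g\<bar> \<le> e * induced_measure offdiag"
proof -
  define s where "s x = (\<Sum>B\<in>Q. g (t B) * indicator B x)" for x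
  have s_bounded: "bounded (s ` offdiag)"
    unfolding s_def using Q(1)
    by (intro bounded_sum_comp bounded_cmult_comp bounded_indicator) (simp add: fin_partition_def)
  have up: "g x \<le> s x + e" and low: "s x + - e \<le> g x" if "x \<in> offdiag" for x
  proof -
    obtain B where "B \<in> Q" "x \<in> B" using Q(1) \<open>x \<in> offdiag\<close> by (auto simp: fin_partition_def)
    moreover have "s x = g (t B)"
      unfolding s_def by (rule sum_indicator_fin_partition[OF Q(1) \<open>B \<in> Q\<close> \<open>x \<in> B\<close>])
    ultimately show "g x \<le> s x + e" "s x + - e \<le> g x" using close[of B x] by auto
  qed
  have "\<Lambda> g \<le> \<Lambda> (\<lambda>x. s x + e)"
    by (intro mono bounded_plus_comp bounded_const_fun g s_bounded up)
  moreover have "\<Lambda> (\<lambda>x. s x + - e) \<le> \<Lambda> g"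
    by (intro mono bounded_plus_comp bounded_const_fun g s_bounded low)
  moreover have shift: "\<Lambda> (\<lambda>x. s x + c) = \<Lambda> s + c * induced_measure offdiag" for c
    using add[OF s_bounded bounded_const_fun] const_eq by simp
  moreover have "riemann_sum induced_measure g Q t = \<Lambda> s"
    using riemann_sum_eq[OF Q(1)] by (simp add: s_def[abs_def])
  ultimately show ?thesis unfolding shift by (simp add: abs_le_iff algebra_simps)
qed

theorem has_ba_integral_induced_measure:
  assumes g: "bounded (g ` offdiag)"
  shows "has_ba_integral induced_measure g (\<Lambda> g)"
proof (rule has_ba_integral_level_partitionI[OF g])
  fix n Q t
  assume n: "0 < n" and Q: "fin_partition Q" "refines_partition Q (level_partition n g)" "\<forall>B\<in>Q. t B \<in> B"
  have "\<bar>g x - g (t B)\<bar> \<le> 1 / real n" if "B \<in> Q" "x \<in> B" for B x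
  proof -
    obtain C where C: "C \<in> level_partition n g" "B \<subseteq> C"
      using Q(2) \<open>B \<in> Q\<close> by (auto simp: refines_partition_def)
    moreover have "x \<in> C" "t B \<in> C" using C(2) that Q(3) by auto
    ultimately show ?thesis by (intro level_partition_oscillation[OF n])
  qed
  from riemann_sum_close[OF g Q(1,3) this]
  show "\<bar>riemann_sum induced_measure g Q t - \<Lambda> g\<bar> \<le> induced_measure offdiag / real n" by simp
qed

end

section \<open>Hahn--Banach\<close>

text \<open>Hahn--Banach in graph form: a linear subspace of \<open>V \<times> \<real>\<close> lying below the graph of a
  sublinear \<open>p\<close> is extended by Zorn's lemma to one that is the graph of a functional on all of \<open>V\<close>.
  Working with graphs avoids having to invert the de Leeuw map on \<open>Lip\<^sub>0\<close>.\<close>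

definition dominated_graph :: "('b \<Rightarrow> real) set \<Rightarrow> (('b \<Rightarrow> real) \<Rightarrow> real) \<Rightarrow> (('b \<Rightarrow> real) \<times> real) set \<Rightarrow> bool"
  where "dominated_graph V p G \<longleftrightarrow>
    (\<forall>a r b s. (a, r) \<in> G \<longrightarrow> (b, s) \<in> G \<longrightarrow> ((\<lambda>x. a x + b x), r + s) \<in> G) \<and>
    (\<forall>a r c. (a, r) \<in> G \<longrightarrow> ((\<lambda>x. c * a x), c * r) \<in> G) \<and>
    (\<forall>a r. (a, r) \<in> G \<longrightarrow> a \<in> V \<and> r \<le> p a)"

lemma dominated_graphD:
  assumes "dominated_graph V p G"
  shows "(a, r) \<in> G \<Longrightarrow> (b, s) \<in> G \<Longrightarrow> ((\<lambda>x. a x + b x), r + s) \<in> G"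
    and "(a, r) \<in> G \<Longrightarrow> ((\<lambda>x. c * a x), c * r) \<in> G"
    and "(a, r) \<in> G \<Longrightarrow> a \<in> V"
    and "(a, r) \<in> G \<Longrightarrow> r \<le> p a"
  using assms unfolding dominated_graph_def by blast+

lemma dominated_graphI:
  assumes "\<And>a r b s. (a, r) \<in> G \<Longrightarrow> (b, s) \<in> G \<Longrightarrow> ((\<lambda>x. a x + b x), r + s) \<in> G"
    and "\<And>a r c. (a, r) \<in> G \<Longrightarrow> ((\<lambda>x. c * a x), c * r) \<in> G"
    and "\<And>a r. (a, r) \<in> G \<Longrightarrow> a \<in> V \<and> r \<le> p a"
  shows "dominated_graph V p G"
  using assms unfolding dominated_graph_def by blast

locale sublinear_functional =
  fixes V :: "('b \<Rightarrow> real) set" and p :: "('b \<Rightarrow> real) \<Rightarrow> real"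
  assumes add_closed: "a \<in> V \<Longrightarrow> b \<in> V \<Longrightarrow> (\<lambda>x. a x + b x) \<in> V"
    and cmult_closed: "a \<in> V \<Longrightarrow> (\<lambda>x. c * a x) \<in> V"
    and subadditive: "a \<in> V \<Longrightarrow> b \<in> V \<Longrightarrow> p (\<lambda>x. a x + b x) \<le> p a + p b"
    and pos_homogeneous: "a \<in> V \<Longrightarrow> 0 \<le> c \<Longrightarrow> p (\<lambda>x. c * a x) = c * p a"
begin

lemma dominated_graph_functional:
  assumes G: "dominated_graph V p G" and "(a, r) \<in> G" "(a, s) \<in> G"
  shows "r = s"
proof -
  have "p (\<lambda>x. 0) = 0"
    using pos_homogeneous[OF dominated_graphD(3)[OF G \<open>(a, r) \<in> G\<close>], of 0] by simp
  moreover have "r + (- 1) * s \<le> p (\<lambda>x. a x + (- 1) * a x)" "s + (- 1) * r \<le> p (\<lambda>x. a x + (- 1) * a x)"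
    using dominated_graphD(4)[OF G dominated_graphD(1)[OF G _ dominated_graphD(2)[OF G]]] assms(2,3)
    by blast+
  ultimately show ?thesis by simp
qed

lemma dominated_graph_Union:
  assumes "C \<in> chains {G. dominated_graph V p G}" "C \<noteq> {}"
  shows "dominated_graph V p (\<Union>C)"
proof (rule dominated_graphI)
  have G: "dominated_graph V p G" if "G \<in> C" for G
    using chainsD2[OF assms(1)] that by blast
  fix a r b s assume "(a, r) \<in> \<Union>C" "(b, s) \<in> \<Union>C"
  then obtain G1 G2 where "G1 \<in> C" "(a, r) \<in> G1" "G2 \<in> C" "(b, s) \<in> G2" by blast
  moreover from this have "G1 \<subseteq> G2 \<or> G2 \<subseteq> G1" using chainsD[OF assms(1)] by blast
  ultimately show "((\<lambda>x. a x + b x), r + s) \<in> \<Union>C"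
    using dominated_graphD(1)[OF G] by blast
next
  have G: "dominated_graph V p G" if "G \<in> C" for G
    using chainsD2[OF assms(1)] that by blast
  fix a r c assume "(a, r) \<in> \<Union>C"
  then show "((\<lambda>x. c * a x), c * r) \<in> \<Union>C" using dominated_graphD(2)[OF G] by blast
next
  have G: "dominated_graph V p G" if "G \<in> C" for G
    using chainsD2[OF assms(1)] that by blast
  fix a r assume "(a, r) \<in> \<Union>C"
  then show "a \<in> V \<and> r \<le> p a" using dominated_graphD(3,4)[OF G] by blast
qed

lemma diff_closed: "a \<in> V \<Longrightarrow> b \<in> V \<Longrightarrow> (\<lambda>x. a x - b x) \<in> V"
  using add_closed[OF _ cmult_closed, of a b "- 1"] by simp

lemma extension_constant:
  assumes G: "dominated_graph V p G" "G \<noteq> {}" and "g0 \<in> V"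
  obtains c where "\<And>b s. (b, s) \<in> G \<Longrightarrow> s - p (\<lambda>x. b x - g0 x) \<le> c"
    and "\<And>b s. (b, s) \<in> G \<Longrightarrow> c \<le> p (\<lambda>x. b x + g0 x) - s"
proof -
  have key: "s - p (\<lambda>x. b x - g0 x) \<le> p (\<lambda>x. b' x + g0 x) - s'"
    if "(b, s) \<in> G" "(b', s') \<in> G" for b s b' s'
  proof -
    have "b \<in> V" "b' \<in> V" using that dominated_graphD(3)[OF G(1)] by blast+
    have "s + s' \<le> p (\<lambda>x. b x + b' x)"
      using dominated_graphD(4)[OF G(1) dominated_graphD(1)[OF G(1) that]] .
    also have "(\<lambda>x. b x + b' x) = (\<lambda>x. (b x - g0 x) + (b' x + g0 x))" by simp
    also have "p \<dots> \<le> p (\<lambda>x. b x - g0 x) + p (\<lambda>x. b' x + g0 x)"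
      using \<open>b \<in> V\<close> \<open>b' \<in> V\<close> \<open>g0 \<in> V\<close> by (intro subadditive diff_closed add_closed)
    finally show ?thesis by simp
  qed
  let ?L = "{s - p (\<lambda>x. b x - g0 x) | b s. (b, s) \<in> G}"
  obtain b0 s0 where "(b0, s0) \<in> G" using G(2) by auto
  then have "?L \<noteq> {}" by blast
  have "bdd_above ?L"
    using key[OF _ \<open>(b0, s0) \<in> G\<close>] unfolding bdd_above_def by blast
  show ?thesis
  proof (rule that[of "Sup ?L"])
    fix b s assume "(b, s) \<in> G"
    then show "s - p (\<lambda>x. b x - g0 x) \<le> Sup ?L"
      by (intro cSup_upper \<open>bdd_above ?L\<close>) blast
    show "Sup ?L \<le> p (\<lambda>x. b x + g0 x) - s"
      using key \<open>(b, s) \<in> G\<close> by (intro cSup_least \<open>?L \<noteq> {}\<close>) blast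
  qed
qed

lemma extension_dominated:
  assumes G: "dominated_graph V p G" and "g0 \<in> V" "(a, r) \<in> G"
    and lower: "\<And>b s. (b, s) \<in> G \<Longrightarrow> s - p (\<lambda>x. b x - g0 x) \<le> c"
    and upper: "\<And>b s. (b, s) \<in> G \<Longrightarrow> c \<le> p (\<lambda>x. b x + g0 x) - s"
  shows "r + t * c \<le> p (\<lambda>x. a x + t * g0 x)"
proof -
  have "a \<in> V" using dominated_graphD(3)[OF G \<open>(a, r) \<in> G\<close>] .
  consider "t = 0" | "t > 0" | "t < 0" by linarith
  then show ?thesis
  proof cases
    case 1
    then show ?thesis using dominated_graphD(4)[OF G \<open>(a, r) \<in> G\<close>] by simp
  next
    case 2
    have "c \<le> p (\<lambda>x. (1 / t) * a x + g0 x) - (1 / t) * r"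
      by (rule upper[OF dominated_graphD(2)[OF G \<open>(a, r) \<in> G\<close>]])
    then have "r + t * c \<le> t * p (\<lambda>x. (1 / t) * a x + g0 x)"
      using 2 by (simp add: field_simps)
    also have "\<dots> = p (\<lambda>x. t * ((1 / t) * a x + g0 x))"
      using 2 \<open>a \<in> V\<close> \<open>g0 \<in> V\<close> by (intro pos_homogeneous[symmetric] add_closed cmult_closed) auto
    also have "(\<lambda>x. t * ((1 / t) * a x + g0 x)) = (\<lambda>x. a x + t * g0 x)"
      using 2 by (simp add: fun_eq_iff distrib_left)
    finally show ?thesis .
  next
    case 3
    have "(1 / - t) * r - p (\<lambda>x. (1 / - t) * a x - g0 x) \<le> c"
      by (rule lower[OF dominated_graphD(2)[OF G \<open>(a, r) \<in> G\<close>]])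
    then have "r + t * c \<le> (- t) * p (\<lambda>x. (1 / - t) * a x - g0 x)"
      using 3 by (simp add: field_simps)
    also have "\<dots> = p (\<lambda>x. (- t) * ((1 / - t) * a x - g0 x))"
      using 3 \<open>a \<in> V\<close> \<open>g0 \<in> V\<close> by (intro pos_homogeneous[symmetric] diff_closed cmult_closed) auto
    also have "(\<lambda>x. (- t) * ((1 / - t) * a x - g0 x)) = (\<lambda>x. a x + t * g0 x)"
      using 3 by (simp add: fun_eq_iff right_diff_distrib)
    finally show ?thesis .
  qed
qed

lemma dominated_graph_extend:
  assumes G: "dominated_graph V p G" "G \<noteq> {}" and "g0 \<in> V"
  shows "\<exists>c. dominated_graph V p ((\<lambda>((a, r), t). (\<lambda>x. a x + t * g0 x, r + t * c)) ` (G \<times> UNIV))"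
proof -
  obtain c where lower: "\<And>b s. (b, s) \<in> G \<Longrightarrow> s - p (\<lambda>x. b x - g0 x) \<le> c"
    and upper: "\<And>b s. (b, s) \<in> G \<Longrightarrow> c \<le> p (\<lambda>x. b x + g0 x) - s"
    using extension_constant[OF assms] by blast
  let ?G = "(\<lambda>((a, r), t). (\<lambda>x. a x + t * g0 x, r + t * c)) ` (G \<times> UNIV)"
  have mem: "(\<lambda>x. a x + t * g0 x, r + t * c) \<in> ?G" if "(a, r) \<in> G" for a r t
    using that by (intro image_eqI[where x = "((a, r), t)"]) auto
  have "dominated_graph V p ?G"
  proof (rule dominated_graphI)
    fix X Y X' Y' assume "(X, Y) \<in> ?G" "(X', Y') \<in> ?G"
    then obtain a r t a' r' t' where "(a, r) \<in> G" "X = (\<lambda>x. a x + t * g0 x)" "Y = r + t * c"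
      and "(a', r') \<in> G" "X' = (\<lambda>x. a' x + t' * g0 x)" "Y' = r' + t' * c" by auto
    then have "(\<lambda>x. (a x + a' x) + (t + t') * g0 x, (r + r') + (t + t') * c) \<in> ?G"
      by (intro mem dominated_graphD(1)[OF G(1)])
    then show "((\<lambda>x. X x + X' x), Y + Y') \<in> ?G"
      by (simp add: \<open>X = _\<close> \<open>X' = _\<close> \<open>Y = _\<close> \<open>Y' = _\<close> algebra_simps)
  next
    fix X Y k assume "(X, Y) \<in> ?G"
    then obtain a r t where "(a, r) \<in> G" "X = (\<lambda>x. a x + t * g0 x)" "Y = r + t * c" by auto
    then have "(\<lambda>x. k * a x + (k * t) * g0 x, k * r + (k * t) * c) \<in> ?G"
      by (intro mem dominated_graphD(2)[OF G(1)])
    then show "((\<lambda>x. k * X x), k * Y) \<in> ?G"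
      by (simp add: \<open>X = _\<close> \<open>Y = _\<close> algebra_simps)
  next
    fix X Y assume "(X, Y) \<in> ?G"
    then obtain a r t where "(a, r) \<in> G" "X = (\<lambda>x. a x + t * g0 x)" "Y = r + t * c" by auto
    moreover have "a \<in> V" using dominated_graphD(3)[OF G(1) \<open>(a, r) \<in> G\<close>] .
    ultimately show "X \<in> V \<and> Y \<le> p X"
      using extension_dominated[OF G(1) \<open>g0 \<in> V\<close> \<open>(a, r) \<in> G\<close> lower upper, of t]
        add_closed[OF \<open>a \<in> V\<close> cmult_closed[OF \<open>g0 \<in> V\<close>]] by simp
  qed
  then show ?thesis by blast
qed

lemma maximal_dominated_graph:
  assumes G0: "dominated_graph V p G0"
  obtains M where "dominated_graph V p M" "G0 \<subseteq> M"
    "\<And>G. dominated_graph V p G \<Longrightarrow> M \<subseteq> G \<Longrightarrow> G = M"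
proof -
  let ?A = "{G. dominated_graph V p G \<and> G0 \<subseteq> G}"
  have "\<exists>U\<in>?A. \<forall>G\<in>C. G \<subseteq> U" if C: "C \<in> chains ?A" for C
  proof (cases "C = {}")
    case True
    then show ?thesis using G0 by blast
  next
    case False
    have "C \<in> chains {G. dominated_graph V p G}" using C by (auto simp: chains_def)
    then have "dominated_graph V p (\<Union>C)" using False by (rule dominated_graph_Union)
    moreover have "G0 \<subseteq> \<Union>C" using C False by (auto simp: chains_def)
    ultimately show ?thesis by blast
  qed
  then have "\<exists>M\<in>?A. \<forall>G\<in>?A. M \<subseteq> G \<longrightarrow> G = M" by (intro Zorn_Lemma2) blast
  then obtain M where "M \<in> ?A" and max: "\<forall>G\<in>?A. M \<subseteq> G \<longrightarrow> G = M" by blast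
  show ?thesis
  proof (rule that)
    show "dominated_graph V p M" "G0 \<subseteq> M" using \<open>M \<in> ?A\<close> by auto
    show "G = M" if "dominated_graph V p G" "M \<subseteq> G" for G
      using max that \<open>G0 \<subseteq> M\<close> by blast
  qed
qed

lemma maximal_dominated_graph_total:
  assumes M: "dominated_graph V p M" "M \<noteq> {}"
    and max: "\<And>G. dominated_graph V p G \<Longrightarrow> M \<subseteq> G \<Longrightarrow> G = M" and g: "g \<in> V"
  shows "\<exists>r. (g, r) \<in> M"
proof -
  obtain a0 r0 where "(a0, r0) \<in> M" using M(2) by auto
  then have "((\<lambda>x. 0 * a0 x), 0 * r0) \<in> M" by (rule dominated_graphD(2)[OF M(1)])
  then have zero: "((\<lambda>x. 0), 0) \<in> M" by simp
  obtain c where ext: "dominated_graph V p ((\<lambda>((a, r), t). (\<lambda>x. a x + t * g x, r + t * c)) ` (M \<times> UNIV))"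
    (is "dominated_graph V p ?G")
    using dominated_graph_extend[OF M g] by blast
  have "(a, r) \<in> ?G" if "(a, r) \<in> M" for a r
  proof (rule image_eqI)
    show "(a, r) = (\<lambda>((a, r), t). (\<lambda>x. a x + t * g x, r + t * c)) ((a, r), 0)" by simp
  qed (use that in simp)
  then have "M \<subseteq> ?G" by auto
  then have "?G = M" by (rule max[OF ext])
  moreover have "(g, c) \<in> ?G"
  proof (rule image_eqI)
    show "(g, c) = (\<lambda>((a, r), t). (\<lambda>x. a x + t * g x, r + t * c)) (((\<lambda>x. 0), 0), 1)" by simp
  qed (use zero in simp)
  ultimately show ?thesis by blast
qed

theorem hahn_banach:
  assumes G0: "dominated_graph V p G0" "G0 \<noteq> {}"
  obtains \<psi> where "\<And>a r. (a, r) \<in> G0 \<Longrightarrow> \<psi> a = r" "\<And>a. a \<in> V \<Longrightarrow> \<psi> a \<le> p a"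
    "\<And>a b. a \<in> V \<Longrightarrow> b \<in> V \<Longrightarrow> \<psi> (\<lambda>x. a x + b x) = \<psi> a + \<psi> b"
    "\<And>a c. a \<in> V \<Longrightarrow> \<psi> (\<lambda>x. c * a x) = c * \<psi> a"
proof -
  obtain M where M: "dominated_graph V p M" and "G0 \<subseteq> M"
    and max: "\<And>G. dominated_graph V p G \<Longrightarrow> M \<subseteq> G \<Longrightarrow> G = M"
    using maximal_dominated_graph[OF G0(1)] by blast
  with G0(2) have "M \<noteq> {}" by blast
  define \<psi> where "\<psi> g = (SOME r. (g, r) \<in> M)" for g
  have \<psi>: "(g, \<psi> g) \<in> M" if "g \<in> V" for g
    unfolding \<psi>_def using maximal_dominated_graph_total[OF M \<open>M \<noteq> {}\<close> max that] by (rule someI_ex)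
  note unique = dominated_graph_functional[OF M]
  show ?thesis
  proof (rule that)
    fix a r assume "(a, r) \<in> G0"
    then have "(a, r) \<in> M" using \<open>G0 \<subseteq> M\<close> by blast
    then show "\<psi> a = r" using unique \<psi> dominated_graphD(3)[OF M] by blast
  next
    show "\<psi> a \<le> p a" if "a \<in> V" for a
      using dominated_graphD(4)[OF M \<psi>[OF that]] .
    show "\<psi> (\<lambda>x. a x + b x) = \<psi> a + \<psi> b" if "a \<in> V" "b \<in> V" for a b
      using unique[OF \<psi>[OF add_closed[OF that]] dominated_graphD(1)[OF M \<psi>[OF that(1)] \<psi>[OF that(2)]]] .
    show "\<psi> (\<lambda>x. c * a x) = c * \<psi> a" if "a \<in> V" for a c
      using unique[OF \<psi>[OF cmult_closed[OF that]] dominated_graphD(2)[OF M \<psi>[OF that]]] .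
  qed
qed

end

lemma lip0_dual_cmult: "lip0_dual z \<phi> \<Longrightarrow> f \<in> Lip0 z \<Longrightarrow> \<phi> (\<lambda>x. c * f x) = c * \<phi> f"
  unfolding lip0_dual_def by blast

lemma lip0_dual_add:
  "lip0_dual z \<phi> \<Longrightarrow> f \<in> Lip0 z \<Longrightarrow> g \<in> Lip0 z \<Longrightarrow> \<phi> (\<lambda>x. f x + g x) = \<phi> f + \<phi> g"
  unfolding lip0_dual_def by blast

lemma bdd_above_lip0_dual:
  assumes "lip0_dual z \<phi>"
  shows "bdd_above ((\<lambda>f. \<bar>\<phi> f\<bar>) ` lip0_ball z)"
proof -
  obtain C where C: "\<And>f. f \<in> Lip0 z \<Longrightarrow> \<bar>\<phi> f\<bar> \<le> C * lipnorm f"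
    using assms unfolding lip0_dual_def by blast
  have "\<bar>\<phi> f\<bar> \<le> \<bar>C\<bar>" if "f \<in> lip0_ball z" for f
  proof -
    have "0 \<le> lipnorm f" "lipnorm f \<le> 1"
      using that lipnorm_nonneg[OF Lip0_lipschitz] by (auto simp: lip0_ball_def)
    then have "C * lipnorm f \<le> \<bar>C\<bar> * lipnorm f" by (intro mult_right_mono) auto
    also have "\<dots> \<le> \<bar>C\<bar>" using \<open>lipnorm f \<le> 1\<close> by (simp add: mult_left_le)
    finally have "C * lipnorm f \<le> \<bar>C\<bar>" .
    then show ?thesis using C[OF lip0_ball_Lip0[OF that]] by linarith
  qed
  then show ?thesis by (intro bdd_aboveI2)
qed

lemma abs_le_dual_norm: "lip0_dual z \<phi> \<Longrightarrow> f \<in> lip0_ball z \<Longrightarrow> \<bar>\<phi> f\<bar> \<le> dual_norm z \<phi>"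
  unfolding dual_norm_def by (rule cSUP_upper[OF _ bdd_above_lip0_dual])

lemma abs_le_dual_norm_lipnorm:
  assumes \<phi>: "lip0_dual z \<phi>" and f: "f \<in> Lip0 z"
  shows "\<bar>\<phi> f\<bar> \<le> dual_norm z \<phi> * lipnorm f"
proof (rule field_le_epsilon)
  fix e :: real assume "e > 0"
  define N where "N = dual_norm z \<phi>"
  have "0 \<le> N"
    unfolding N_def using abs_le_dual_norm[OF \<phi> zero_in_lip0_ball] by linarith
  define L where "L = lipnorm f + e / (N + 1)"
  have "0 < e / (N + 1)" using \<open>e > 0\<close> \<open>0 \<le> N\<close> by simp
  then have "0 < L" using lipnorm_nonneg[OF Lip0_lipschitz[OF f]] by (simp add: L_def)
  have "(1 / L * lipnorm f)-lipschitz_on UNIV (\<lambda>x. 1 / L * f x)"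
    using \<open>0 < L\<close> by (intro lipschitz_on_cmult_real_nonneg lipschitz_on_lipnorm Lip0_lipschitz[OF f]) simp
  moreover have "1 / L * lipnorm f \<le> 1"
    using \<open>0 < L\<close> \<open>e > 0\<close> \<open>0 \<le> N\<close> by (simp add: L_def field_simps)
  moreover have "f z = 0" using f by (simp add: Lip0_def)
  ultimately have "(\<lambda>x. 1 / L * f x) \<in> lip0_ball z"
    by (auto simp: lip0_ball_iff intro: lipschitz_on_le)
  from abs_le_dual_norm[OF \<phi> this] have "\<bar>\<phi> f\<bar> / L \<le> N"
    unfolding lip0_dual_cmult[OF \<phi> f] N_def using \<open>0 < L\<close> by (simp add: abs_mult)
  then have "\<bar>\<phi> f\<bar> \<le> N * lipnorm f + N * (e / (N + 1))"
    using \<open>0 < L\<close> by (simp add: L_def field_simps)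
  also have "N * (e / (N + 1)) \<le> e"
    using \<open>0 \<le> N\<close> \<open>e > 0\<close> by (simp add: field_simps)
  finally show "\<bar>\<phi> f\<bar> \<le> dual_norm z \<phi> * lipnorm f + e" by (simp add: N_def)
qed

lemma slice_nonempty:
  assumes \<phi>: "lip0_dual z \<phi>" "dual_norm z \<phi> = 1" and "\<alpha> > 0"
  shows "slice z \<phi> \<alpha> \<noteq> {}"
proof -
  have "1 - \<alpha> < (SUP f\<in>lip0_ball z. \<bar>\<phi> f\<bar>)" using assms by (simp add: dual_norm_def)
  moreover have "lip0_ball z \<noteq> {}" using zero_in_lip0_ball by blast
  ultimately obtain f where f: "f \<in> lip0_ball z" "1 - \<alpha> < \<bar>\<phi> f\<bar>"
    using less_cSUP_iff[OF _ bdd_above_lip0_dual[OF \<phi>(1)]] by blast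
  have "\<phi> (\<lambda>x. - f x) = - \<phi> f"
    using lip0_dual_cmult[OF \<phi>(1) lip0_ball_Lip0[OF f(1)], of "- 1"] by simp
  then have "f \<in> slice z \<phi> \<alpha> \<or> (\<lambda>x. - f x) \<in> slice z \<phi> \<alpha>"
    using f lip0_ball_uminus[OF f(1)] by (auto simp: slice_def abs_real_def split: if_splits)
  then show ?thesis by blast
qed

lemma lip0_diam_eq_2_iff:
  assumes "S \<subseteq> lip0_ball z" "S \<noteq> {}"
  shows "lip0_diam S = 2 \<longleftrightarrow> (\<forall>e>0. \<exists>f\<in>S. \<exists>h\<in>S. 2 - e < lipnorm (\<lambda>x. f x - h x))"
proof -
  let ?F = "\<lambda>q. lipnorm (\<lambda>x. fst q x - snd q x)"
  have le2: "?F q \<le> 2" if "q \<in> S \<times> S" for q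
    using that assms(1) by (cases q) (auto intro: lipnorm_diff_le_2[of _ z])
  then have bdd: "bdd_above (?F ` (S \<times> S))" by (intro bdd_aboveI2)
  have "lip0_diam S \<le> 2" unfolding lip0_diam_def using assms(2) le2 by (intro cSUP_least) auto
  have "lip0_diam S = 2 \<longleftrightarrow> (\<forall>e>0. 2 - e < lip0_diam S)"
  proof
    assume close: "\<forall>e>0. 2 - e < lip0_diam S"
    show "lip0_diam S = 2"
    proof (rule ccontr)
      assume "lip0_diam S \<noteq> 2"
      with \<open>lip0_diam S \<le> 2\<close> have "2 - lip0_diam S > 0" by simp
      with close have "2 - (2 - lip0_diam S) < lip0_diam S" by blast
      then show False by simp
    qed
  qed simp
  also have "\<dots> \<longleftrightarrow> (\<forall>e>0. 2 - e < (SUP q\<in>S \<times> S. ?F q))" by (simp add: lip0_diam_def)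
  also have "\<dots> \<longleftrightarrow> (\<forall>e>0. \<exists>q\<in>S \<times> S. 2 - e < ?F q)"
    using less_cSUP_iff[OF _ bdd] assms(2) by auto
  finally show ?thesis by auto
qed

lemma has_ba_integral_Phi_star:
  assumes "ba_additive \<mu>" "ba_nonneg \<mu>" "\<exists>C. C-lipschitz_on UNIV f"
  shows "has_ba_integral \<mu> (de_leeuw f) (Phi_star \<mu> f)"
proof -
  obtain I where "has_ba_integral \<mu> (de_leeuw f) I"
    using has_ba_integral_exists[OF assms(1,2) bounded_de_leeuw[OF assms(3)]] by blast
  moreover from this have "Phi_star \<mu> f = I" unfolding Phi_star_def by (rule ba_integral_eqI)
  ultimately show ?thesis by simp
qed

lemma ba_norm_eq_offdiag:
  fixes \<mu> :: "('a \<times> 'a) set \<Rightarrow> real"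
  assumes "ba_additive \<mu>" "ba_nonneg \<mu>"
  shows "ba_norm \<mu> = \<mu> offdiag"
proof -
  let ?P = "{P. finite P \<and> disjoint P \<and> (\<forall>A\<in>P. A \<subseteq> (offdiag :: ('a \<times> 'a) set))}"
  have sum_le: "(\<Sum>A\<in>P. \<bar>\<mu> A\<bar>) \<le> \<mu> offdiag" if "P \<in> ?P" for P
  proof -
    have "(\<Sum>A\<in>P. \<bar>\<mu> A\<bar>) = (\<Sum>A\<in>P. \<mu> A)"
      using that assms(2) by (intro sum.cong) (auto simp: ba_nonneg_def)
    also have "\<dots> = \<mu> (\<Union>P)" using that ba_additive_Union[OF assms(1)] by simp
    also have "\<dots> \<le> \<mu> offdiag" using that by (intro ba_nonneg_mono[OF assms]) auto
    finally show ?thesis .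
  qed
  have "{offdiag} \<in> ?P" by simp
  have "(\<Sum>A\<in>{offdiag}. \<bar>\<mu> A\<bar>) \<le> ba_norm \<mu>"
    unfolding ba_norm_def by (rule cSUP_upper[OF \<open>{offdiag} \<in> ?P\<close> bdd_aboveI2[OF sum_le]])
  moreover have "ba_norm \<mu> \<le> \<mu> offdiag"
    unfolding ba_norm_def using sum_le \<open>{offdiag} \<in> ?P\<close> by (intro cSUP_least) blast+
  ultimately show ?thesis by simp
qed

lemma Phi_star_lip0_dual:
  fixes z :: "'a::metric_space"
  assumes \<mu>: "ba_additive \<mu>" "ba_nonneg \<mu>"
  shows "lip0_dual z (Phi_star \<mu>)"
  unfolding lip0_dual_def
proof (intro conjI ballI allI)
  have int: "has_ba_integral \<mu> (de_leeuw f) (Phi_star \<mu> f)" if "f \<in> Lip0 z" for f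
    by (rule has_ba_integral_Phi_star[OF \<mu> Lip0_lipschitz[OF that]])
  fix f g c assume f: "f \<in> Lip0 z" and g: "g \<in> Lip0 z"
  show "Phi_star \<mu> (\<lambda>x. f x + g x) = Phi_star \<mu> f + Phi_star \<mu> g"
    using int[OF Lip0_add[OF f g], unfolded de_leeuw_add] has_ba_integral_add[OF int[OF f] int[OF g]]
    by (rule has_ba_integral_unique)
  show "Phi_star \<mu> (\<lambda>x. c * f x) = c * Phi_star \<mu> f"
    using int[OF Lip0_cmult[OF f], unfolded de_leeuw_cmult] has_ba_integral_cmult[OF int[OF f]]
    by (rule has_ba_integral_unique)
next
  show "\<exists>C. \<forall>f\<in>Lip0 z. \<bar>Phi_star \<mu> f\<bar> \<le> C * lipnorm f"
  proof (intro exI ballI)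
    fix f assume f: "f \<in> Lip0 z"
    note int = has_ba_integral_Phi_star[OF \<mu> Lip0_lipschitz[OF f]]
    note bound = abs_de_leeuw_le_lipnorm[OF Lip0_lipschitz[OF f]]
    have "Phi_star \<mu> f \<le> lipnorm f * \<mu> offdiag"
      using bound by (intro has_ba_integral_mono[OF int has_ba_integral_const[OF \<mu>(1)] \<mu>(2)]) (auto simp: abs_le_iff)
    moreover have "- lipnorm f * \<mu> offdiag \<le> Phi_star \<mu> f"
      using bound by (intro has_ba_integral_mono[OF has_ba_integral_const[OF \<mu>(1)] int \<mu>(2)]) (auto simp: abs_le_iff minus_le_iff)
    ultimately show "\<bar>Phi_star \<mu> f\<bar> \<le> \<mu> offdiag * lipnorm f" by (simp add: abs_le_iff algebra_simps)
  qed
qed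

lemma Phi_star_ge_of_steep:
  fixes h :: "'a::metric_space \<Rightarrow> real"
  assumes \<mu>: "ba_additive \<mu>" "ba_nonneg \<mu>" and h: "h \<in> lip0_ball z"
    and A: "A \<subseteq> offdiag" "\<forall>(x, y)\<in>A. \<gamma> * dist x y \<le> h x - h y"
  shows "\<gamma> * \<mu> A - \<mu> (offdiag - A) \<le> Phi_star \<mu> h"
proof -
  have "has_ba_integral \<mu> (\<lambda>p. \<gamma> * indicator A p + (- 1) * indicator (offdiag - A) p)
      (\<gamma> * \<mu> A + (- 1) * \<mu> (offdiag - A))"
    using A(1) by (intro has_ba_integral_add has_ba_integral_cmult has_ba_integral_indicator[OF \<mu>(1)]) auto
  moreover have "\<gamma> * indicator A p + (- 1) * indicator (offdiag - A) p \<le> de_leeuw h p" if "p \<in> offdiag" for p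
  proof (cases "p \<in> A")
    case True
    obtain x y where p: "p = (x, y)" by fastforce
    with True A(1) have "x \<noteq> y" by (auto simp: offdiag_def)
    with True A(2) p show ?thesis by (auto simp: de_leeuw_ge_iff)
  next
    case False
    then show ?thesis using that abs_de_leeuw_le_1[OF h, of p] by simp
  qed
  ultimately show ?thesis
    using has_ba_integral_mono[OF _ has_ba_integral_Phi_star[OF \<mu> Lip0_lipschitz[OF lip0_ball_Lip0[OF h]]] \<mu>(2)]
    by force
qed

lemma measure_de_leeuw_less:
  assumes \<mu>: "ba_additive \<mu>" "ba_nonneg \<mu>" and k: "k \<in> lip0_ball z"
  shows "(1 - \<gamma>) * \<mu> {p\<in>offdiag. de_leeuw k p < \<gamma>} \<le> \<mu> offdiag - Phi_star \<mu> k"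
proof -
  let ?B = "{p\<in>offdiag. de_leeuw k p < \<gamma>}"
  have "has_ba_integral \<mu> (\<lambda>p. 1 + (- (1 - \<gamma>)) * indicator ?B p) (1 * \<mu> offdiag + (- (1 - \<gamma>)) * \<mu> ?B)"
    by (intro has_ba_integral_add has_ba_integral_const has_ba_integral_cmult has_ba_integral_indicator \<mu>(1)) auto
  moreover have "de_leeuw k p \<le> 1 + (- (1 - \<gamma>)) * indicator ?B p" for p
    using abs_de_leeuw_le_1[OF k, of p] by (auto simp: indicator_def)
  ultimately have "Phi_star \<mu> k \<le> 1 * \<mu> offdiag + (- (1 - \<gamma>)) * \<mu> ?B"
    by (intro has_ba_integral_mono[OF has_ba_integral_Phi_star[OF \<mu> Lip0_lipschitz[OF lip0_ball_Lip0[OF k]]] _ \<mu>(2)])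
  then show ?thesis by (simp add: algebra_simps)
qed

section \<open>Representing norm-one functionals by optimal measures\<close>

definition offdiag_sup :: "('a \<times> 'a \<Rightarrow> real) \<Rightarrow> real"
  where "offdiag_sup g = (SUP p\<in>offdiag. g p)"

lemma le_offdiag_sup: "bounded (g ` offdiag) \<Longrightarrow> p \<in> offdiag \<Longrightarrow> g p \<le> offdiag_sup g"
  unfolding offdiag_sup_def by (rule cSUP_upper) (auto intro: bounded_imp_bdd_above)

lemma offdiag_sup_le:
  "(offdiag :: ('a \<times> 'a) set) \<noteq> {} \<Longrightarrow> (\<And>p. p \<in> offdiag \<Longrightarrow> g p \<le> K) \<Longrightarrow> offdiag_sup (g :: 'a \<times> 'a \<Rightarrow> real) \<le> K"
  unfolding offdiag_sup_def by (rule cSUP_least)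

lemma offdiag_sup_const: "(offdiag :: ('a \<times> 'a) set) \<noteq> {} \<Longrightarrow> offdiag_sup (\<lambda>p :: 'a \<times> 'a. c) = c"
  by (simp add: offdiag_sup_def)

lemma sublinear_functional_offdiag_sup:
  assumes "(offdiag :: ('a \<times> 'a) set) \<noteq> {}"
  shows "sublinear_functional {g :: 'a \<times> 'a \<Rightarrow> real. bounded (g ` offdiag)} offdiag_sup"
proof
  fix a b :: "'a \<times> 'a \<Rightarrow> real" and c :: real
  assume a: "a \<in> {g. bounded (g ` offdiag)}" and b: "b \<in> {g. bounded (g ` offdiag)}"
  then show "(\<lambda>x. a x + b x) \<in> {g. bounded (g ` offdiag)}" "(\<lambda>x. c * a x) \<in> {g. bounded (g ` offdiag)}"
    by (auto intro: bounded_plus_comp bounded_cmult_comp)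
  show "offdiag_sup (\<lambda>x. a x + b x) \<le> offdiag_sup a + offdiag_sup b"
    using a b by (intro offdiag_sup_le[OF assms] add_mono le_offdiag_sup) auto
next
  fix a :: "'a \<times> 'a \<Rightarrow> real" and c :: real
  assume a: "a \<in> {g. bounded (g ` offdiag)}" and "0 \<le> c"
  show "offdiag_sup (\<lambda>x. c * a x) = c * offdiag_sup a"
  proof (cases "c = 0")
    case True
    then show ?thesis by (simp add: offdiag_sup_const[OF assms])
  next
    case False
    with \<open>0 \<le> c\<close> have "0 < c" by simp
    have "offdiag_sup (\<lambda>x. c * a x) \<le> c * offdiag_sup a"
      using a \<open>0 \<le> c\<close> by (intro offdiag_sup_le[OF assms] mult_left_mono le_offdiag_sup) auto
    moreover have "offdiag_sup a \<le> offdiag_sup (\<lambda>x. c * a x) / c"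
      using a \<open>0 < c\<close> le_offdiag_sup[OF bounded_cmult_comp[of a offdiag c]]
      by (intro offdiag_sup_le[OF assms]) (auto simp: field_simps)
    ultimately show ?thesis using \<open>0 < c\<close> by (simp add: field_simps)
  qed
qed

lemma lipnorm_le_offdiag_sup_de_leeuw:
  fixes f :: "'a::metric_space \<Rightarrow> real"
  assumes "(offdiag :: ('a \<times> 'a) set) \<noteq> {}" and f: "\<exists>C. C-lipschitz_on UNIV f"
  shows "lipnorm f \<le> offdiag_sup (de_leeuw f)"
proof (rule lipnorm_le, rule lipschitz_on_UNIV_realI)
  note le = le_offdiag_sup[OF bounded_de_leeuw[OF f]]
  fix x y :: 'a
  show "\<bar>f x - f y\<bar> \<le> offdiag_sup (de_leeuw f) * dist x y"
  proof (cases "x = y")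
    case False
    then have "(x, y) \<in> offdiag" "(y, x) \<in> offdiag" by (auto simp: offdiag_def)
    from le[OF this(1)] le[OF this(2)] False show ?thesis
      by (simp add: de_leeuw_def dist_commute abs_le_iff divide_le_eq algebra_simps)
  qed simp
next
  obtain x y where "(x, y) \<in> (offdiag :: ('a \<times> 'a) set)" using assms(1) by auto
  then have "(y, x) \<in> (offdiag :: ('a \<times> 'a) set)" by (auto simp: offdiag_def)
  have "de_leeuw f (x, y) + de_leeuw f (y, x) = 0"
    by (simp add: de_leeuw_def dist_commute diff_divide_distrib)
  then show "0 \<le> offdiag_sup (de_leeuw f)"
    using le_offdiag_sup[OF bounded_de_leeuw[OF f] \<open>(x, y) \<in> offdiag\<close>]
      le_offdiag_sup[OF bounded_de_leeuw[OF f] \<open>(y, x) \<in> offdiag\<close>] by linarith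
qed

lemma offdiag_nonempty:
  fixes z :: "'a::metric_space"
  assumes "lip0_dual z \<phi>" "dual_norm z \<phi> \<noteq> 0"
  shows "(offdiag :: ('a \<times> 'a) set) \<noteq> {}"
proof
  assume "(offdiag :: ('a \<times> 'a) set) = {}"
  then have single: "x = z" for x by (auto simp: offdiag_def)
  have "\<phi> (\<lambda>x. 0) = 0"
    using lip0_dual_cmult[OF assms(1) lip0_ball_Lip0[OF zero_in_lip0_ball], of 0] by simp
  moreover have "f = (\<lambda>x. 0)" if "f \<in> lip0_ball z" for f
  proof
    fix x
    show "f x = 0" using that single[of x] by (simp add: lip0_ball_iff)
  qed
  ultimately have "dual_norm z \<phi> = (SUP f\<in>lip0_ball z. 0)"
    unfolding dual_norm_def by (intro SUP_cong) auto
  also have "\<dots> = 0" using zero_in_lip0_ball[of z] by (intro cSUP_const) auto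
  finally show False using assms(2) by simp
qed

lemma dominated_graph_lip0_dual:
  fixes z :: "'a::metric_space"
  assumes \<phi>: "lip0_dual z \<phi>" "dual_norm z \<phi> = 1" and ne: "(offdiag :: ('a \<times> 'a) set) \<noteq> {}"
  shows "dominated_graph {g. bounded (g ` offdiag)} offdiag_sup ((\<lambda>f. (de_leeuw f, \<phi> f)) ` Lip0 z)"
    (is "dominated_graph ?V _ ?G")
proof (rule dominated_graphI)
  fix a r b s assume "(a, r) \<in> ?G" "(b, s) \<in> ?G"
  then obtain f g where "f \<in> Lip0 z" "g \<in> Lip0 z" "a = de_leeuw f" "r = \<phi> f" "b = de_leeuw g" "s = \<phi> g"
    by auto
  then show "((\<lambda>x. a x + b x), r + s) \<in> ?G"
    by (auto simp: de_leeuw_add lip0_dual_add[OF \<phi>(1)] intro!: image_eqI[where x = "\<lambda>x. f x + g x"] Lip0_add)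
next
  fix a r c assume "(a, r) \<in> ?G"
  then obtain f where "f \<in> Lip0 z" "a = de_leeuw f" "r = \<phi> f" by auto
  then show "((\<lambda>x. c * a x), c * r) \<in> ?G"
    by (auto simp: de_leeuw_cmult lip0_dual_cmult[OF \<phi>(1)] intro!: image_eqI[where x = "\<lambda>x. c * f x"] Lip0_cmult)
next
  fix a r assume "(a, r) \<in> ?G"
  then obtain f where f: "f \<in> Lip0 z" "a = de_leeuw f" "r = \<phi> f" by auto
  have "\<phi> f \<le> lipnorm f"
    using abs_le_dual_norm_lipnorm[OF \<phi>(1) f(1)] \<phi>(2) by simp
  then show "a \<in> ?V \<and> r \<le> offdiag_sup a"
    using f lipnorm_le_offdiag_sup_de_leeuw[OF ne Lip0_lipschitz[OF f(1)]] bounded_de_leeuw[OF Lip0_lipschitz[OF f(1)]]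
    by auto
qed

lemma positive_functional_if_dominated:
  assumes ne: "(offdiag :: ('a \<times> 'a) set) \<noteq> {}"
    and le: "\<And>a. bounded (a ` offdiag) \<Longrightarrow> \<psi> a \<le> offdiag_sup (a :: 'a \<times> 'a \<Rightarrow> real)"
    and add: "\<And>a b. bounded (a ` offdiag) \<Longrightarrow> bounded (b ` offdiag) \<Longrightarrow> \<psi> (\<lambda>x. a x + b x) = \<psi> a + \<psi> b"
    and cmult: "\<And>a c. bounded (a ` offdiag) \<Longrightarrow> \<psi> (\<lambda>x. c * a x) = c * \<psi> a"
  shows "positive_functional \<psi>"
proof
  fix a b :: "'a \<times> 'a \<Rightarrow> real"
  assume a: "bounded (a ` offdiag)" and b: "bounded (b ` offdiag)"
  then show "\<psi> (\<lambda>x. a x + b x) = \<psi> a + \<psi> b" by (rule add)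
  assume "\<And>x. x \<in> offdiag \<Longrightarrow> a x \<le> b x"
  then have "offdiag_sup (\<lambda>x. a x + (- 1) * b x) \<le> 0" by (intro offdiag_sup_le[OF ne]) auto
  moreover have "\<psi> (\<lambda>x. a x + (- 1) * b x) = \<psi> a - \<psi> b"
    using add[of a "\<lambda>x. (- 1) * b x"] cmult[of b "- 1"] a b bounded_cmult_comp[OF b, of "- 1"]
    by simp
  ultimately show "\<psi> a \<le> \<psi> b"
    using le[of "\<lambda>x. a x + (- 1) * b x"] bounded_minus_comp[OF a b] by simp
qed (rule cmult)

lemma lip0_dual_representation:
  fixes z :: "'a::metric_space"
  assumes \<phi>: "lip0_dual z \<phi>" "dual_norm z \<phi> = 1"
  obtains \<mu> :: "('a \<times> 'a) set \<Rightarrow> real"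
  where "ba_measure \<mu>" "ba_nonneg \<mu>" "\<mu> offdiag = 1" "\<And>f. f \<in> Lip0 z \<Longrightarrow> Phi_star \<mu> f = \<phi> f"
proof -
  have ne: "(offdiag :: ('a \<times> 'a) set) \<noteq> {}" using offdiag_nonempty[OF \<phi>(1)] \<phi>(2) by simp
  interpret sublinear_functional "{g :: 'a \<times> 'a \<Rightarrow> real. bounded (g ` offdiag)}" offdiag_sup
    by (rule sublinear_functional_offdiag_sup[OF ne])
  have "dominated_graph {g. bounded (g ` offdiag)} offdiag_sup ((\<lambda>f. (de_leeuw f, \<phi> f)) ` Lip0 z)"
    "(\<lambda>f. (de_leeuw f, \<phi> f)) ` Lip0 z \<noteq> {}"
    using dominated_graph_lip0_dual[OF \<phi> ne] lip0_ball_Lip0[OF zero_in_lip0_ball] by blast+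
  then obtain \<psi> where \<psi>_graph: "\<And>f. f \<in> Lip0 z \<Longrightarrow> \<psi> (de_leeuw f) = \<phi> f"
    and \<psi>_le: "\<And>a. bounded (a ` offdiag) \<Longrightarrow> \<psi> a \<le> offdiag_sup a"
    and \<psi>_add: "\<And>a b. bounded (a ` offdiag) \<Longrightarrow> bounded (b ` offdiag) \<Longrightarrow> \<psi> (\<lambda>x. a x + b x) = \<psi> a + \<psi> b"
    and \<psi>_cmult: "\<And>a c. bounded (a ` offdiag) \<Longrightarrow> \<psi> (\<lambda>x. c * a x) = c * \<psi> a"
    by (rule hahn_banach) blast+
  interpret \<psi>: positive_functional \<psi>
    using positive_functional_if_dominated[OF ne \<psi>_le \<psi>_add \<psi>_cmult] .
  have "\<psi> (\<lambda>x. 1) \<le> 1" "- \<psi> (\<lambda>x. 1) \<le> - 1"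
    using \<psi>_le[of "\<lambda>x. 1"] \<psi>_le[of "\<lambda>x. - 1 * 1"] \<psi>_cmult[of "\<lambda>x. 1" "- 1"]
    by (simp_all add: bounded_const_fun offdiag_sup_const[OF ne])
  then have "\<psi>.induced_measure offdiag = 1" using \<psi>.const_eq[of 1] by simp
  moreover have "Phi_star \<psi>.induced_measure f = \<phi> f" if "f \<in> Lip0 z" for f
    unfolding Phi_star_def \<psi>_graph[OF that, symmetric]
    by (intro ba_integral_eqI \<psi>.has_ba_integral_induced_measure bounded_de_leeuw Lip0_lipschitz[OF that])
  ultimately show ?thesis
    using that \<psi>.induced_measure_ba_measure \<psi>.induced_measure_nonneg by blast
qed

lemma far_pair_in_lip0_ball:
  assumes fb: "f \<in> lip0_ball z" and hb: "h \<in> lip0_ball z" and "0 \<le> \<gamma>"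
    and far: "1 + \<gamma> < lipnorm (\<lambda>x. f x - h x)"
  obtains u v where "u \<noteq> v" "\<gamma> * dist u v \<le> f u - f v" "\<gamma> * dist v u \<le> h v - h u"
proof -
  obtain u v where uv: "(1 + \<gamma>) * dist u v < (f u - h u) - (f v - h v)"
    using diff_gt_if_less_lipnorm[OF _ far] \<open>0 \<le> \<gamma>\<close> by force
  have "f u - f v \<le> dist u v" "h v - h u \<le> dist u v"
    using lip0_ball_abs_diff_le[OF fb, of u v] lip0_ball_abs_diff_le[OF hb, of v u] by (auto simp: dist_commute)
  with uv have "\<gamma> * dist u v \<le> f u - f v" "\<gamma> * dist v u \<le> h v - h u"
    by (auto simp: dist_commute algebra_simps)
  moreover from uv have "u \<noteq> v" by auto
  ultimately show ?thesis using that by blast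
qed

lemma measure_steep_set_ge:
  fixes f h :: "'a::metric_space \<Rightarrow> real"
  assumes \<mu>: "ba_additive \<mu>" "ba_nonneg \<mu>" "\<mu> offdiag = 1" and "\<gamma> < 1"
    and f: "f \<in> lip0_ball z" "1 - (1 - \<gamma>)\<^sup>2 / 2 < Phi_star \<mu> f"
    and h: "h \<in> lip0_ball z" "1 - (1 - \<gamma>)\<^sup>2 / 2 < Phi_star \<mu> h"
  shows "\<gamma> \<le> \<mu> {p\<in>offdiag. \<gamma> \<le> de_leeuw f p \<and> \<gamma> \<le> de_leeuw h p}"
proof -
  have small: "\<mu> {p\<in>offdiag. de_leeuw k p < \<gamma>} < (1 - \<gamma>) / 2"
    if "k \<in> lip0_ball z" "1 - (1 - \<gamma>)\<^sup>2 / 2 < Phi_star \<mu> k" for k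
  proof -
    have "(1 - \<gamma>) * \<mu> {p\<in>offdiag. de_leeuw k p < \<gamma>} < (1 - \<gamma>) * ((1 - \<gamma>) / 2)"
      using measure_de_leeuw_less[OF \<mu>(1,2) that(1), of \<gamma>] that(2) \<mu>(3) by (simp add: power2_eq_square)
    then show ?thesis using \<open>\<gamma> < 1\<close> by simp
  qed
  let ?Bf = "{p\<in>offdiag. de_leeuw f p < \<gamma>}" and ?Bh = "{p\<in>offdiag. de_leeuw h p < \<gamma>}"
  have "{p\<in>offdiag. \<gamma> \<le> de_leeuw f p \<and> \<gamma> \<le> de_leeuw h p} = offdiag - (?Bf \<union> ?Bh)" by auto
  moreover have "\<mu> (offdiag - (?Bf \<union> ?Bh)) = 1 - \<mu> (?Bf \<union> ?Bh)"
    using ba_additive_Diff[OF \<mu>(1), of "?Bf \<union> ?Bh" offdiag] \<mu>(3) by auto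
  moreover have "\<mu> (?Bf \<union> ?Bh) \<le> \<mu> ?Bf + \<mu> ?Bh" by (intro ba_nonneg_Un_le \<mu>(1,2)) auto
  ultimately show ?thesis using small[OF f] small[OF h] by simp
qed

lemma steep_on_insert:
  assumes "\<forall>p\<in>A. \<gamma> \<le> de_leeuw f p" "A \<subseteq> offdiag" "\<gamma> * dist u v \<le> f u - f v"
  shows "\<forall>(x, y)\<in>A \<union> {(u, v)}. \<gamma> * dist x y \<le> f x - f y"
proof (intro ballI)
  fix p assume p: "p \<in> A \<union> {(u, v)}"
  obtain x y where "p = (x, y)" by fastforce
  moreover have "\<gamma> * dist x y \<le> f x - f y" if "(x, y) \<in> A"
    using that assms(1,2) de_leeuw_ge_iff[of x y \<gamma> f] by (auto simp: offdiag_def)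
  ultimately show "case p of (x, y) \<Rightarrow> \<gamma> * dist x y \<le> f x - f y" using p assms(3) by auto
qed

lemma LD2P_imp_cyc_mono_pair:
  fixes z :: "'a::metric_space" and \<mu> :: "('a \<times> 'a) set \<Rightarrow> real"
  assumes "LD2P z" and \<mu>: "ba_measure \<mu>" "optimal z \<mu>" "ba_norm \<mu> = 1" and \<gamma>: "0 < \<gamma>" "\<gamma> < 1"
  shows "\<exists>A u v. A \<subseteq> offdiag \<and> u \<noteq> v \<and> \<gamma> \<le> \<mu> A \<and>
    cyc_mono \<gamma> (A \<union> {(u, v)}) \<and> cyc_mono \<gamma> (A \<union> {(v, u)})"
proof -
  have add: "ba_additive \<mu>" and pos: "ba_nonneg \<mu>"
    using \<mu> by (simp_all add: ba_measure_additive optimal_nonneg)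
  have one: "\<mu> offdiag = 1" using ba_norm_eq_offdiag[OF add pos] \<mu>(3) by simp
  \<comment> \<open>thin enough that \<open>\<Phi>f < \<gamma>\<close> holds only on a set of measure \<open>< (1 - \<gamma>) / 2\<close> for \<open>f\<close> in the slice\<close>
  define \<alpha> where "\<alpha> = (1 - \<gamma>)\<^sup>2 / 2"
  have "\<alpha> > 0" using \<gamma> by (simp add: \<alpha>_def)
  have dual: "lip0_dual z (Phi_star \<mu>)" "dual_norm z (Phi_star \<mu>) = 1"
    using Phi_star_lip0_dual[OF add pos] \<mu>(2,3) by (auto simp: optimal_def)
  then have "lip0_diam (slice z (Phi_star \<mu>) \<alpha>) = 2"
    using \<open>LD2P z\<close> \<open>\<alpha> > 0\<close> by (simp add: LD2P_def)
  moreover have "slice z (Phi_star \<mu>) \<alpha> \<subseteq> lip0_ball z" by (auto simp: slice_def)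
  ultimately have "\<forall>e>0. \<exists>f\<in>slice z (Phi_star \<mu>) \<alpha>. \<exists>h\<in>slice z (Phi_star \<mu>) \<alpha>. 2 - e < lipnorm (\<lambda>x. f x - h x)"
    using lip0_diam_eq_2_iff slice_nonempty[OF dual \<open>\<alpha> > 0\<close>] by blast
  then obtain f h where f: "f \<in> slice z (Phi_star \<mu>) \<alpha>" and h: "h \<in> slice z (Phi_star \<mu>) \<alpha>"
    and far: "1 + \<gamma> < lipnorm (\<lambda>x. f x - h x)"
    using \<gamma> by (force dest: spec[of _ "1 - \<gamma>"])
  have fb: "f \<in> lip0_ball z" and hb: "h \<in> lip0_ball z" using f h by (auto simp: slice_def)
  obtain u v where "u \<noteq> v" and steep_uv: "\<gamma> * dist u v \<le> f u - f v" "\<gamma> * dist v u \<le> h v - h u"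
    using far_pair_in_lip0_ball[OF fb hb _ far] \<gamma>(1) by auto
  define A where "A = {p\<in>offdiag. \<gamma> \<le> de_leeuw f p \<and> \<gamma> \<le> de_leeuw h p}"
  have "\<gamma> \<le> \<mu> A"
    unfolding A_def using f h \<gamma> by (intro measure_steep_set_ge[OF add pos one]) (auto simp: slice_def \<alpha>_def)
  have A: "A \<subseteq> offdiag" "\<forall>p\<in>A. \<gamma> \<le> de_leeuw f p" "\<forall>p\<in>A. \<gamma> \<le> de_leeuw h p"
    by (auto simp: A_def)
  then have "cyc_mono \<gamma> (A \<union> {(u, v)})" "cyc_mono \<gamma> (A \<union> {(v, u)})"
    using steep_on_insert[of A \<gamma> f u v] steep_on_insert[of A \<gamma> h v u] steep_uv fb hb
      cyc_mono_iff_lip0_ball_potential[where z = z] by blast+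
  with A(1) \<open>u \<noteq> v\<close> \<open>\<gamma> \<le> \<mu> A\<close> show ?thesis by blast
qed

lemma optimal_if_Phi_star_eq:
  fixes z :: "'a::metric_space"
  assumes "lip0_dual z \<phi>" "dual_norm z \<phi> = 1" "ba_measure \<mu>" "ba_nonneg \<mu>" "\<mu> offdiag = 1"
    and "\<And>f. f \<in> Lip0 z \<Longrightarrow> Phi_star \<mu> f = \<phi> f"
  shows "optimal z \<mu>" "ba_norm \<mu> = 1"
proof -
  show "ba_norm \<mu> = 1" using ba_norm_eq_offdiag[OF ba_measure_additive[OF assms(3)] assms(4)] assms(5) by simp
  moreover have "dual_norm z (Phi_star \<mu>) = dual_norm z \<phi>"
    unfolding dual_norm_def using assms(6)[OF lip0_ball_Lip0] by (intro SUP_cong) auto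
  ultimately show "optimal z \<mu>" using assms(2,4) by (simp add: optimal_def ba_nonneg_def)
qed

lemma gamma_close_to_1:
  fixes \<alpha> e :: real
  assumes "0 < \<alpha>" "0 < e"
  obtains \<gamma> :: real where "0 < \<gamma>" "\<gamma> < 1" "1 - \<alpha> < (1 + \<gamma>) * \<gamma> - 1" "2 - e < 2 * \<gamma>"
proof
  define \<gamma> where "\<gamma> = max (1 / 2) (max (1 - \<alpha> / 4) (1 - e / 4))"
  have "\<gamma> < 1" "0 < \<gamma>" using assms by (simp_all add: \<gamma>_def)
  then show "0 < \<gamma>" "\<gamma> < 1" by simp_all
  have "1 - e / 4 \<le> \<gamma>" by (simp add: \<gamma>_def)
  then show "2 - e < 2 * \<gamma>" using assms by linarith
  have "1 - \<alpha> / 4 \<le> \<gamma>" by (simp add: \<gamma>_def)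
  with \<open>\<gamma> < 1\<close> \<open>0 < \<gamma>\<close> have "(1 - \<gamma>) * (2 + \<gamma>) \<le> (\<alpha> / 4) * 3" by (intro mult_mono) auto
  then show "1 - \<alpha> < (1 + \<gamma>) * \<gamma> - 1" using assms by (simp add: algebra_simps)
qed

lemma cyc_mono_pair_imp_far_in_slice:
  fixes z :: "'a::metric_space" and \<mu> :: "('a \<times> 'a) set \<Rightarrow> real"
  assumes \<mu>: "ba_additive \<mu>" "ba_nonneg \<mu>" "\<mu> offdiag = 1"
    and rep: "\<And>f. f \<in> Lip0 z \<Longrightarrow> Phi_star \<mu> f = \<phi> f"
    and \<gamma>: "0 < \<gamma>" "1 - \<alpha> < (1 + \<gamma>) * \<gamma> - 1"
    and A: "A \<subseteq> offdiag" "u \<noteq> v" "\<gamma> \<le> \<mu> A" "cyc_mono \<gamma> (A \<union> {(u, v)})" "cyc_mono \<gamma> (A \<union> {(v, u)})"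
  obtains h1 h2 where "h1 \<in> slice z \<phi> \<alpha>" "h2 \<in> slice z \<phi> \<alpha>" "2 * \<gamma> \<le> lipnorm (\<lambda>x. h1 x - h2 x)"
proof -
  have in_slice: "h \<in> slice z \<phi> \<alpha>"
    if h: "h \<in> lip0_ball z" "\<forall>(x, y)\<in>A. \<gamma> * dist x y \<le> h x - h y" for h
  proof -
    have "\<gamma> * \<mu> A - \<mu> (offdiag - A) \<le> \<phi> h"
      using Phi_star_ge_of_steep[OF \<mu>(1,2) h(1) A(1) h(2)] rep[OF lip0_ball_Lip0[OF h(1)]] by simp
    moreover have "\<mu> (offdiag - A) = 1 - \<mu> A" using ba_additive_Diff[OF \<mu>(1) A(1)] \<mu>(3) by simp
    moreover have "(1 + \<gamma>) * \<gamma> \<le> (1 + \<gamma>) * \<mu> A" using A(3) \<gamma>(1) by (intro mult_left_mono) auto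
    ultimately show ?thesis using h(1) \<gamma>(2) by (simp add: slice_def algebra_simps)
  qed
  obtain h1 h2 where h1: "h1 \<in> lip0_ball z" "\<forall>(x, y)\<in>A \<union> {(u, v)}. \<gamma> * dist x y \<le> h1 x - h1 y"
    and h2: "h2 \<in> lip0_ball z" "\<forall>(x, y)\<in>A \<union> {(v, u)}. \<gamma> * dist x y \<le> h2 x - h2 y"
    using A(4,5) cyc_mono_iff_lip0_ball_potential[where z = z] by meson
  have "2 * \<gamma> * dist u v \<le> \<bar>(h1 u - h2 u) - (h1 v - h2 v)\<bar>"
    using h1(2) h2(2) by (auto simp: dist_commute abs_real_def)
  then have "2 * \<gamma> \<le> lipnorm (\<lambda>x. h1 x - h2 x)"
    using h1(1) h2(1) A(2) lipschitz_on_diff[of 1 UNIV h1 1 h2]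
    by (intro le_lipnorm_if_diff_ge[of _ u v]) (auto simp: lip0_ball_iff)
  moreover have "h1 \<in> slice z \<phi> \<alpha>" "h2 \<in> slice z \<phi> \<alpha>"
    using h1 h2 by (auto intro!: in_slice)
  ultimately show ?thesis using that by blast
qed

lemma cyc_mono_pairs_imp_LD2P:
  fixes z :: "'a::metric_space"
  assumes H: "\<And>\<mu> \<gamma>. ba_measure \<mu> \<Longrightarrow> optimal z \<mu> \<Longrightarrow> ba_norm \<mu> = 1 \<Longrightarrow> 0 < \<gamma> \<Longrightarrow> \<gamma> < 1 \<Longrightarrow>
    \<exists>A u v. A \<subseteq> (offdiag :: ('a \<times> 'a) set) \<and> u \<noteq> v \<and> \<gamma> \<le> \<mu> A \<and>
      cyc_mono \<gamma> (A \<union> {(u, v)}) \<and> cyc_mono \<gamma> (A \<union> {(v, u)})"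
  shows "LD2P z"
  unfolding LD2P_def
proof (intro allI impI, elim conjE)
  fix \<phi> and \<alpha> :: real assume \<phi>: "lip0_dual z \<phi>" "dual_norm z \<phi> = 1" and "0 < \<alpha>"
  obtain \<mu> where \<mu>: "ba_measure \<mu>" "ba_nonneg \<mu>" "\<mu> offdiag = 1"
    and rep: "\<And>f. f \<in> Lip0 z \<Longrightarrow> Phi_star \<mu> f = \<phi> f"
    using lip0_dual_representation[OF \<phi>] by blast
  note opt = optimal_if_Phi_star_eq[OF \<phi> \<mu> rep]
  have "\<exists>f\<in>slice z \<phi> \<alpha>. \<exists>h\<in>slice z \<phi> \<alpha>. 2 - e < lipnorm (\<lambda>x. f x - h x)" if "0 < e" for e
  proof -
    obtain \<gamma> where \<gamma>: "0 < \<gamma>" "\<gamma> < 1" "1 - \<alpha> < (1 + \<gamma>) * \<gamma> - 1" "2 - e < 2 * \<gamma>"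
      using gamma_close_to_1[OF \<open>0 < \<alpha>\<close> \<open>0 < e\<close>] .
    then obtain A u v where "A \<subseteq> offdiag" "u \<noteq> v" "\<gamma> \<le> \<mu> A"
      "cyc_mono \<gamma> (A \<union> {(u, v)})" "cyc_mono \<gamma> (A \<union> {(v, u)})"
      using H[OF \<mu>(1) opt(1,2)] by blast
    from cyc_mono_pair_imp_far_in_slice[OF ba_measure_additive[OF \<mu>(1)] \<mu>(2,3) rep \<gamma>(1,3) this]
    show ?thesis using \<gamma>(4) by (metis less_le_trans)
  qed
  moreover have "slice z \<phi> \<alpha> \<subseteq> lip0_ball z" by (auto simp: slice_def)
  ultimately show "lip0_diam (slice z \<phi> \<alpha>) = 2"
    using lip0_diam_eq_2_iff slice_nonempty[OF \<phi> \<open>0 < \<alpha>\<close>] by blast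
qed

theorem proposition3p2:
  fixes z :: "'a::metric_space"
  shows "LD2P z \<longleftrightarrow>
    (\<forall>\<mu>. ba_measure \<mu> \<and> optimal z \<mu> \<and> ba_norm \<mu> = 1 \<longrightarrow>
      (\<forall>\<gamma>. 0 < \<gamma> \<and> \<gamma> < 1 \<longrightarrow>
        (\<exists>A u v. A \<subseteq> (offdiag :: ('a \<times> 'a) set) \<and> u \<noteq> v \<and> \<mu> A \<ge> \<gamma> \<and>
           cyc_mono \<gamma> (A \<union> {(u, v)}) \<and> cyc_mono \<gamma> (A \<union> {(v, u)}))))"
proof
  assume "LD2P z"
  then show "\<forall>\<mu>. ba_measure \<mu> \<and> optimal z \<mu> \<and> ba_norm \<mu> = 1 \<longrightarrow>
      (\<forall>\<gamma>. 0 < \<gamma> \<and> \<gamma> < 1 \<longrightarrow>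
        (\<exists>A u v. A \<subseteq> offdiag \<and> u \<noteq> v \<and> \<mu> A \<ge> \<gamma> \<and>
           cyc_mono \<gamma> (A \<union> {(u, v)}) \<and> cyc_mono \<gamma> (A \<union> {(v, u)})))"
    using LD2P_imp_cyc_mono_pair by blast
qed (rule cyc_mono_pairs_imp_LD2P, blast)

end
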